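(* Let $G$ be a group and $S\subset G$ a finite generating set with $S\cap S^{-1}=\emptyset$. Let $$R=\{a\cdot b\cdot c\mid a,b,c\in S,\ abc=e \text{ in } G\}\cup\{a\cdot b\cdot c^{-1}\mid a,b,c\in S,\ abc^{-1}=e\text{ in } G\}.$$ Then $Flag(G,S)$ is a simply connected simplicial complex (with $\pi_1(Flag(G,S)/G)=G$) if and only if $\langle S\mid R\rangle$ is a presentation of $G$.
   Context: For a group $G$ and a finite generating set $S\subset G$ with $S\cap S^{-1}=\emptyset$ (in particular $e\notin S$ and $s^2\neq e$ for $s\in S$), the Cayley graph $\Gamma(G,S)$ has vertex set $\{v[g]\mid g\in G\}$ and, for each $g\in G$, $s\in S$, a directed edge $e[g,s]$ from $v[g]$ to $v[gs]$; since $S\cap S^{-1}=\emptyset$ the underlying undirected graph is simple. $Flag(G,S)$ denotes the flag complex of $\Gamma(G,S)$: the simplicial complex having a simplex for every finite set of pairwise adjacent vertices. $G$ acts on $Flag(G,S)$ by left multiplication, properly discontinuously and cocompactly. *)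

theory Defs
  imports "HOL-Analysis.Analysis" "HOL-Algebra.Generated_Groups"
begin

definition cayley_adj :: "('a, 'b) monoid_scheme \<Rightarrow> 'a set \<Rightarrow> 'a \<Rightarrow> 'a \<Rightarrow> bool" where
  "cayley_adj G S g h \<longleftrightarrow> g \<in> carrier G \<and> h \<in> carrier G \<and> g \<noteq> h \<and>
     (inv\<^bsub>G\<^esub> g \<otimes>\<^bsub>G\<^esub> h \<in> S \<or> inv\<^bsub>G\<^esub> h \<otimes>\<^bsub>G\<^esub> g \<in> S)"

definition flag_simplex :: "('a, 'b) monoid_scheme \<Rightarrow> 'a set \<Rightarrow> 'a set \<Rightarrow> bool" where
  "flag_simplex G S \<sigma> \<longleftrightarrow> finite \<sigma> \<and> \<sigma> \<noteq> {} \<and> \<sigma> \<subseteq> carrier G \<and>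
     (\<forall>g\<in>\<sigma>. \<forall>h\<in>\<sigma>. g \<noteq> h \<longrightarrow> cayley_adj G S g h)"

text \<open>Geometric realization of Flag(G,S) in barycentric coordinates: functions
  carrier G \<rightarrow> [0,1], zero outside a simplex, summing to 1.  As a subset of the
  type 'a => real it carries the product topology.\<close>
definition flag_realization :: "('a, 'b) monoid_scheme \<Rightarrow> 'a set \<Rightarrow> ('a \<Rightarrow> real) set" where
  "flag_realization G S = {f. \<exists>\<sigma>. flag_simplex G S \<sigma> \<and> (\<forall>v. v \<notin> \<sigma> \<longrightarrow> f v = 0) \<and>
      (\<forall>v. 0 \<le> f v) \<and> sum f \<sigma> = 1}"

text \<open>A letter (s, b) stands for s if b = False and for s^{-1} if b = True.\<close>
type_synonym 'a word = "('a \<times> bool) list"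

definition inv_letter :: "'a \<times> bool \<Rightarrow> 'a \<times> bool" where
  "inv_letter x = (fst x, \<not> snd x)"

definition inv_word :: "'a word \<Rightarrow> 'a word" where
  "inv_word w = rev (map inv_letter w)"

definition word_eval :: "('a, 'b) monoid_scheme \<Rightarrow> 'a word \<Rightarrow> 'a" where
  "word_eval G w = foldr (\<lambda>x acc. (if snd x then inv\<^bsub>G\<^esub> (fst x) else fst x) \<otimes>\<^bsub>G\<^esub> acc) w \<one>\<^bsub>G\<^esub>"

definition word_over :: "'a set \<Rightarrow> 'a word \<Rightarrow> bool" where
  "word_over S w \<longleftrightarrow> fst ` set w \<subseteq> S"

definition free_red :: "'a word \<Rightarrow> 'a word \<Rightarrow> bool" where
  "free_red u v \<longleftrightarrow> (\<exists>p q x. u = p @ [x, inv_letter x] @ q \<and> v = p @ q)"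

definition free_eq :: "'a word \<Rightarrow> 'a word \<Rightarrow> bool" where
  "free_eq = (\<lambda>u v. free_red u v \<or> free_red v u)\<^sup>*\<^sup>*"

text \<open>w lies in the normal closure of the relators R in the free group on S:
  w is freely equal to a product of conjugates u r^{\<plusminus>1} u^{-1}.\<close>
definition in_normal_closure :: "'a set \<Rightarrow> 'a word set \<Rightarrow> 'a word \<Rightarrow> bool" where
  "in_normal_closure S R w \<longleftrightarrow>
     (\<exists>L :: ('a word \<times> 'a word \<times> bool) list.
        (\<forall>(u, r, e) \<in> set L. word_over S u \<and> r \<in> R) \<and>
        free_eq w (concat (map (\<lambda>(u, r, e). u @ (if e then inv_word r else r) @ inv_word u) L)))"

definition is_presentation :: "('a, 'b) monoid_scheme \<Rightarrow> 'a set \<Rightarrow> 'a word set \<Rightarrow> bool" where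
  "is_presentation G S R \<longleftrightarrow>
     (\<forall>g\<in>carrier G. \<exists>w. word_over S w \<and> word_eval G w = g) \<and>
     (\<forall>w. word_over S w \<longrightarrow> (word_eval G w = \<one>\<^bsub>G\<^esub> \<longleftrightarrow> in_normal_closure S R w))"

definition triangle_relators :: "('a, 'b) monoid_scheme \<Rightarrow> 'a set \<Rightarrow> 'a word set" where
  "triangle_relators G S =
     {[(a, False), (b, False), (c, False)] | a b c.
         a \<in> S \<and> b \<in> S \<and> c \<in> S \<and> a \<otimes>\<^bsub>G\<^esub> b \<otimes>\<^bsub>G\<^esub> c = \<one>\<^bsub>G\<^esub>} \<union>
     {[(a, False), (b, False), (c, True)] | a b c.
         a \<in> S \<and> b \<in> S \<and> c \<in> S \<and> a \<otimes>\<^bsub>G\<^esub> b \<otimes>\<^bsub>G\<^esub> inv\<^bsub>G\<^esub> c = \<one>\<^bsub>G\<^esub>}"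

end

theory Submission
  imports Defs
begin

text \<open>Every loop in the realization is homotopic to an edge loop: by a Lebesgue number argument
  the loop stays, on each of N short intervals, inside the open star of a vertex, and consecutive
  such vertices together with the point of the loop span a simplex. Edge loops are compared
  through the moves that insert a vertex inside a triangle or repeat a vertex; both are realized by
  homotopies. The letters read along an edge loop based at 1 spell a relation w of G, and a move
  changes w only by a conjugate of a triangle relator and free reductions. Hence if R presents G,
  every edge loop can be moved to a constant one. Conversely, for a relation w, a null-homotopy of
  its edge loop restricted to a fine grid of the square, each cell labelled by a vertex whose open
  star contains it, yields rows of labels that are edge loops differing by moves; so w lies in the
  normal closure of R.\<close>


section \<open>The geometric realization\<close>

definition support :: "('a \<Rightarrow> real) \<Rightarrow> 'a set" where
  "support f = {v. f v \<noteq> 0}"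

definition vertex_pt :: "'a \<Rightarrow> 'a \<Rightarrow> real" where
  "vertex_pt a = (\<lambda>v. if v = a then 1 else 0)"

definition mix :: "real \<Rightarrow> ('a \<Rightarrow> real) \<Rightarrow> ('a \<Rightarrow> real) \<Rightarrow> ('a \<Rightarrow> real)" where
  "mix s f g = (\<lambda>v. (1 - s) * f v + s * g v)"

definition edge_pt :: "'a \<Rightarrow> 'a \<Rightarrow> real \<Rightarrow> ('a \<Rightarrow> real)" where
  "edge_pt a b s = mix s (vertex_pt a) (vertex_pt b)"

text \<open>Clamping makes edge_seg a b constant outside [0, 1], so that the recursively defined
  edge_path below is continuous on all of the real line.\<close>

definition clamp01 :: "real \<Rightarrow> real" where
  "clamp01 s = max 0 (min 1 s)"

definition edge_seg :: "'a \<Rightarrow> 'a \<Rightarrow> real \<Rightarrow> ('a \<Rightarrow> real)" where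
  "edge_seg a b s = edge_pt a b (clamp01 s)"

lemma mix_0[simp]: "mix 0 f g = f" and mix_1[simp]: "mix 1 f g = g"
  and mix_same[simp]: "mix s f f = f"
  by (auto simp: mix_def algebra_simps)

lemma edge_pt_0[simp]: "edge_pt a b 0 = vertex_pt a" and edge_pt_1[simp]: "edge_pt a b 1 = vertex_pt b"
  and edge_pt_same[simp]: "edge_pt a a s = vertex_pt a"
  by (auto simp: edge_pt_def)

lemma support_vertex_pt[simp]: "support (vertex_pt a) = {a}"
  by (auto simp: support_def vertex_pt_def)

lemma support_mix: "support (mix s f g) \<subseteq> support f \<union> support g"
  by (auto simp: support_def mix_def)

lemma support_edge_pt: "support (edge_pt a b s) \<subseteq> {a, b}"
  using support_mix[of s "vertex_pt a" "vertex_pt b"] by (auto simp: edge_pt_def)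

lemma clamp01_range: "0 \<le> clamp01 s" "clamp01 s \<le> 1" by (auto simp: clamp01_def)

lemma clamp01_id[simp]: "0 \<le> s \<Longrightarrow> s \<le> 1 \<Longrightarrow> clamp01 s = s" by (auto simp: clamp01_def)

lemma clamp01_le0[simp]: "s \<le> 0 \<Longrightarrow> clamp01 s = 0" by (auto simp: clamp01_def)

lemma clamp01_ge1[simp]: "1 \<le> s \<Longrightarrow> clamp01 s = 1" by (auto simp: clamp01_def)

lemma continuous_on_clamp01: "continuous_on A clamp01"
  unfolding clamp01_def by (intro continuous_intros)

lemma continuous_on_edge_pt: "continuous_on A (edge_pt a b)"
  unfolding edge_pt_def mix_def
  by (intro continuous_on_coordinatewise_then_product continuous_intros)

lemma continuous_on_edge_seg: "continuous_on A (edge_seg a b)"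
proof -
  have "continuous_on A (edge_pt a b \<circ> clamp01)"
    by (rule continuous_on_compose[OF continuous_on_clamp01]) (rule continuous_on_edge_pt)
  then show ?thesis by (simp add: edge_seg_def o_def)
qed

definition adjeq :: "('a, 'b) monoid_scheme \<Rightarrow> 'a set \<Rightarrow> 'a \<Rightarrow> 'a \<Rightarrow> bool" where
  "adjeq G S g h \<longleftrightarrow> g \<in> carrier G \<and> h \<in> carrier G \<and> (g = h \<or> cayley_adj G S g h)"

definition flag_tri :: "('a, 'b) monoid_scheme \<Rightarrow> 'a set \<Rightarrow> 'a \<Rightarrow> 'a \<Rightarrow> 'a \<Rightarrow> bool" where
  "flag_tri G S a b c \<longleftrightarrow> adjeq G S a b \<and> adjeq G S b c \<and> adjeq G S a c"

lemma cayley_adj_sym: "cayley_adj G S g h \<Longrightarrow> cayley_adj G S h g"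
  by (auto simp: cayley_adj_def)

lemma adjeq_sym: "adjeq G S g h \<Longrightarrow> adjeq G S h g"
  by (auto simp: adjeq_def cayley_adj_sym)

lemma adjeq_refl: "g \<in> carrier G \<Longrightarrow> adjeq G S g g"
  by (auto simp: adjeq_def)

lemma flag_simplex_iff: "flag_simplex G S \<sigma> \<longleftrightarrow> finite \<sigma> \<and> \<sigma> \<noteq> {} \<and> (\<forall>g\<in>\<sigma>. \<forall>h\<in>\<sigma>. adjeq G S g h)"
  by (auto simp: flag_simplex_def adjeq_def cayley_adj_def)

lemma flag_simplex_subset: "flag_simplex G S \<sigma> \<Longrightarrow> \<tau> \<subseteq> \<sigma> \<Longrightarrow> \<tau> \<noteq> {} \<Longrightarrow> flag_simplex G S \<tau>"
  by (auto simp: flag_simplex_iff intro: finite_subset)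

lemma adjeq_carrier: "adjeq G S g h \<Longrightarrow> g \<in> carrier G" "adjeq G S g h \<Longrightarrow> h \<in> carrier G"
  by (auto simp: adjeq_def)

lemma flag_simplex_triangle: "flag_tri G S a b c \<Longrightarrow> flag_simplex G S {a, b, c}"
  unfolding flag_simplex_iff flag_tri_def
  by (auto intro: adjeq_sym adjeq_refl dest: adjeq_carrier)

lemma flag_simplex_edge: "adjeq G S a b \<Longrightarrow> flag_simplex G S {a, b}"
  unfolding flag_simplex_iff
  by (auto intro: adjeq_sym adjeq_refl dest: adjeq_carrier)

lemma realization_support:
  assumes "f \<in> flag_realization G S"
  shows "(\<forall>v. 0 \<le> f v) \<and> flag_simplex G S (support f) \<and> sum f (support f) = 1"
proof -
  obtain \<sigma> where s: "flag_simplex G S \<sigma>" "\<forall>v. v \<notin> \<sigma> \<longrightarrow> f v = 0" "\<forall>v. 0 \<le> f v" "sum f \<sigma> = 1"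
    using assms by (auto simp: flag_realization_def)
  have sub: "support f \<subseteq> \<sigma>" using s(2) by (auto simp: support_def)
  have fin: "finite \<sigma>" using s(1) by (simp add: flag_simplex_def)
  have "sum f (support f) = sum f \<sigma>"
    by (rule sum.mono_neutral_left[OF fin sub]) (auto simp: support_def)
  then have 1: "sum f (support f) = 1" using s by simp
  then have "support f \<noteq> {}" by auto
  then have "flag_simplex G S (support f)" by (rule flag_simplex_subset[OF s(1) sub])
  then show ?thesis using s(3) 1 by blast
qed

lemma realizationI:
  assumes "\<forall>v. 0 \<le> f v" "flag_simplex G S \<sigma>" "support f \<subseteq> \<sigma>" "sum f \<sigma> = 1"
  shows "f \<in> flag_realization G S"
  using assms unfolding flag_realization_def support_def by blast

lemma realization_support_adjeq:
  "f \<in> flag_realization G S \<Longrightarrow> a \<in> support f \<Longrightarrow> b \<in> support f \<Longrightarrow> adjeq G S a b"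
  using realization_support[of f G S] by (auto simp: flag_simplex_iff)

lemma realization_support_nonempty: "f \<in> flag_realization G S \<Longrightarrow> support f \<noteq> {}"
  using realization_support[of f G S] by (auto simp: flag_simplex_iff)

lemma mix_in_realization:
  assumes "f \<in> flag_realization G S" "g \<in> flag_realization G S" "0 \<le> s" "s \<le> 1"
    and "flag_simplex G S (support f \<union> support g)"
  shows "mix s f g \<in> flag_realization G S"
proof -
  let ?\<sigma> = "support f \<union> support g"
  have fin: "finite ?\<sigma>" using assms(5) by (simp add: flag_simplex_def)
  have f: "(\<forall>v. 0 \<le> f v) \<and> sum f (support f) = 1" and g: "(\<forall>v. 0 \<le> g v) \<and> sum g (support g) = 1"
    using realization_support[OF assms(1)] realization_support[OF assms(2)] by auto
  have "sum f (support f) = sum f ?\<sigma>"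
    by (rule sum.mono_neutral_left[OF fin]) (auto simp: support_def)
  then have sf: "sum f ?\<sigma> = 1" using f by simp
  have "sum g (support g) = sum g ?\<sigma>"
    by (rule sum.mono_neutral_left[OF fin]) (auto simp: support_def)
  then have sg: "sum g ?\<sigma> = 1" using g by simp
  show ?thesis
  proof (rule realizationI[OF _ assms(5)])
    show "\<forall>v. 0 \<le> mix s f g v" using f g assms(3,4) by (auto simp: mix_def)
    show "support (mix s f g) \<subseteq> ?\<sigma>" by (rule support_mix)
    show "sum (mix s f g) ?\<sigma> = 1"
      using sf sg by (simp add: mix_def sum.distrib sum_distrib_left[symmetric])
  qed
qed

lemma vertex_pt_in_realization: "a \<in> carrier G \<Longrightarrow> vertex_pt a \<in> flag_realization G S"
  by (rule realizationI[of _ G S "{a}"]) (auto simp: flag_simplex_iff adjeq_refl vertex_pt_def support_def)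

lemma edge_pt_in_realization: "adjeq G S a b \<Longrightarrow> 0 \<le> s \<Longrightarrow> s \<le> 1 \<Longrightarrow> edge_pt a b s \<in> flag_realization G S"
  unfolding edge_pt_def
proof (rule mix_in_realization)
  assume "adjeq G S a b"
  then show "vertex_pt a \<in> flag_realization G S" "vertex_pt b \<in> flag_realization G S"
    "flag_simplex G S (support (vertex_pt a) \<union> support (vertex_pt b))"
    using flag_simplex_edge[of G S a b] by (auto intro: vertex_pt_in_realization dest: adjeq_carrier simp: insert_commute)
qed

lemma edge_seg_in_realization: "adjeq G S a b \<Longrightarrow> edge_seg a b s \<in> flag_realization G S"
  unfolding edge_seg_def using clamp01_range by (intro edge_pt_in_realization) auto

lemma continuous_on_square_coord:
  assumes "path p"
  shows "continuous_on ({0..1}\<times>{0..1}) (\<lambda>x. p (snd x) v)"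
proof -
  have "continuous_on {0..1} (\<lambda>t. p t v)" using assms unfolding path_def by (rule continuous_on_product_then_coordinatewise)
  then show ?thesis
    by (rule continuous_on_compose2) (auto intro!: continuous_intros)
qed

lemma straight_homotopy:
  assumes "path p" "path q" "path_image p \<subseteq> flag_realization G S" "path_image q \<subseteq> flag_realization G S"
    and "\<And>t. t \<in> {0..1} \<Longrightarrow> flag_simplex G S (support (p t) \<union> support (q t))"
  shows "continuous_on ({0..1}\<times>{0..1}) (\<lambda>y. mix (fst y) (p (snd y)) (q (snd y)))"
    and "(\<lambda>y. mix (fst y) (p (snd y)) (q (snd y))) \<in> ({0..1}\<times>{0..1}) \<rightarrow> flag_realization G S"
proof -
  show "continuous_on ({0..1}\<times>{0..1}) (\<lambda>y. mix (fst y) (p (snd y)) (q (snd y)))"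
    unfolding mix_def
  proof (rule continuous_on_coordinatewise_then_product)
    fix v
    have cp: "continuous_on ({0..1}\<times>{0..1}) (\<lambda>x. p (snd x) v)" by (rule continuous_on_square_coord[OF assms(1)])
    have cq: "continuous_on ({0..1}\<times>{0..1}) (\<lambda>x. q (snd x) v)" by (rule continuous_on_square_coord[OF assms(2)])
    show "continuous_on ({0..1}\<times>{0..1}) (\<lambda>y. (1 - fst y) * p (snd y) v + fst y * q (snd y) v)"
      by (intro continuous_intros cp cq)
  qed
  show "(\<lambda>y. mix (fst y) (p (snd y)) (q (snd y))) \<in> ({0..1}\<times>{0..1}) \<rightarrow> flag_realization G S"
  proof
    fix y :: "real \<times> real" assume y: "y \<in> {0..1}\<times>{0..1}"
    then have "p (snd y) \<in> flag_realization G S" "q (snd y) \<in> flag_realization G S"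
      using assms(3,4) by (auto simp: path_image_def)
    then show "mix (fst y) (p (snd y)) (q (snd y)) \<in> flag_realization G S"
      using y assms(5)[of "snd y"] by (intro mix_in_realization) auto
  qed
qed

lemma homotopic_paths_straight:
  assumes "path p" "path q" "path_image p \<subseteq> flag_realization G S" "path_image q \<subseteq> flag_realization G S"
    and "pathstart q = pathstart p" "pathfinish q = pathfinish p"
    and "\<And>t. t \<in> {0..1} \<Longrightarrow> flag_simplex G S (support (p t) \<union> support (q t))"
  shows "homotopic_paths (flag_realization G S) p q"
  unfolding homotopic_paths
proof (intro exI[of _ "\<lambda>y. mix (fst y) (p (snd y)) (q (snd y))"] conjI)
  note h = straight_homotopy[OF assms(1-4) assms(7)]
  show "continuous_on ({0..1}\<times>{0..1}) (\<lambda>y. mix (fst y) (p (snd y)) (q (snd y)))" by (rule h(1))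
  show "(\<lambda>y. mix (fst y) (p (snd y)) (q (snd y))) \<in> ({0..1}\<times>{0..1}) \<rightarrow> flag_realization G S" by (rule h(2))
qed (use assms(5,6) in \<open>auto simp: pathstart_def pathfinish_def\<close>)

lemma homotopic_loops_straight:
  assumes "path p" "path q" "path_image p \<subseteq> flag_realization G S" "path_image q \<subseteq> flag_realization G S"
    and "pathfinish p = pathstart p" "pathfinish q = pathstart q"
    and "\<And>t. t \<in> {0..1} \<Longrightarrow> flag_simplex G S (support (p t) \<union> support (q t))"
  shows "homotopic_loops (flag_realization G S) p q"
  unfolding homotopic_loops
proof (intro exI[of _ "\<lambda>y. mix (fst y) (p (snd y)) (q (snd y))"] conjI)
  note h = straight_homotopy[OF assms(1-4) assms(7)]
  show "continuous_on ({0..1}\<times>{0..1}) (\<lambda>y. mix (fst y) (p (snd y)) (q (snd y)))" by (rule h(1))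
  show "(\<lambda>y. mix (fst y) (p (snd y)) (q (snd y))) \<in> ({0..1}\<times>{0..1}) \<rightarrow> flag_realization G S" by (rule h(2))
qed (use assms(5,6) in \<open>auto simp: pathstart_def pathfinish_def\<close>)

section \<open>Edge paths\<close>

text \<open>edge_path [v_0, ..., v_m] runs through the edge from v_i to v_(i+1) during the time
  interval [i/m, (i+1)/m].\<close>

fun edge_path :: "'a list \<Rightarrow> real \<Rightarrow> ('a \<Rightarrow> real)" where
  "edge_path [] t = (\<lambda>v. 0)"
| "edge_path [a] t = vertex_pt a"
| "edge_path (a # b # L) t = (if t * real (Suc (length L)) \<le> 1 then edge_seg a b (t * real (Suc (length L)))
       else edge_path (b # L) ((t * real (Suc (length L)) - 1) / real (length L)))"

lemma edge_path_start: "L \<noteq> [] \<Longrightarrow> t \<le> 0 \<Longrightarrow> edge_path L t = vertex_pt (hd L)"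
proof (induction L t rule: edge_path.induct)
  case (3 a b L t)
  have "t * real (Suc (length L)) \<le> 0" using 3(3) by (simp add: mult_nonpos_nonneg)
  then show ?case by (simp add: edge_seg_def)
qed auto

lemma edge_path_end: "L \<noteq> [] \<Longrightarrow> 1 \<le> t \<Longrightarrow> edge_path L t = vertex_pt (last L)"
proof (induction L t rule: edge_path.induct)
  case (3 a b L t)
  let ?m = "real (Suc (length L))"
  have tm: "?m \<le> t * ?m" using 3(3) by simp
  show ?case
  proof (cases "t * ?m \<le> 1")
    case True
    have "?m \<le> 1" using True tm by linarith
    then have L0: "L = []" by simp
    have "1 \<le> t * ?m" using 3(3) L0 by simp
    then have "t * ?m = 1" using True by linarith
    then show ?thesis using True L0 by (simp add: edge_seg_def)
  next
    case False
    show ?thesis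
    proof (cases "L = []")
      case True then show ?thesis using False by simp
    next
      case nL: False
      have "1 \<le> (t * ?m - 1) / real (length L)"
        using tm nL by (simp add: field_simps)
      then have "edge_path (b # L) ((t * ?m - 1) / real (length L)) = vertex_pt (last (b # L))"
        using 3(1)[OF False] by simp
      then show ?thesis using False by simp
    qed
  qed
qed auto

lemma continuous_on_edge_path: "continuous_on UNIV (edge_path L)"
proof (induction L rule: induct_list012)
  case 1 then show ?case by (simp add: continuous_on_const)
next
  case (2 a) then show ?case by (simp add: continuous_on_const)
next
  case (3 a b L)
  let ?m = "real (Suc (length L))"
  have eq: "edge_path (a # b # L) = (\<lambda>t. if t * ?m \<le> 1 then edge_seg a b (t * ?m)
       else edge_path (b # L) ((t * ?m - 1) / real (length L)))"
    by (rule ext) simp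
  have "continuous_on UNIV (\<lambda>t. if t * ?m \<le> 1 then edge_seg a b (t * ?m)
       else edge_path (b # L) ((t * ?m - 1) / real (length L)))"
  proof (rule continuous_on_cases_le)
    show "continuous_on {t \<in> UNIV. t * ?m \<le> 1} (\<lambda>t. edge_seg a b (t * ?m))"
      by (rule continuous_on_compose2[OF continuous_on_edge_seg[of UNIV]]) (auto intro!: continuous_intros)
    have ci: "continuous_on {t \<in> UNIV. 1 \<le> t * ?m} (\<lambda>t. (t * ?m - 1) * inverse (real (length L)))"
      by (intro continuous_intros)
    show "continuous_on {t \<in> UNIV. 1 \<le> t * ?m} (\<lambda>t. edge_path (b # L) ((t * ?m - 1) / real (length L)))"
      using continuous_on_compose2[OF 3(2) ci] by (simp add: divide_inverse)
    show "continuous_on UNIV (\<lambda>t. t * ?m)" by (intro continuous_intros)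
    fix t assume "t * ?m = 1"
    then show "edge_seg a b (t * ?m) = edge_path (b # L) ((t * ?m - 1) / real (length L))"
      by (simp add: edge_seg_def edge_path_start)
  qed
  then show ?case using eq by simp
qed

lemma path_edge_path: "path (edge_path L)"
  unfolding path_def using continuous_on_edge_path continuous_on_subset by blast

lemma real_in_unit_block:
  assumes "0 \<le> x" "x \<le> real m" "0 < m"
  shows "\<exists>j<m. real j \<le> x \<and> x \<le> real j + 1"
proof (cases "x = real m")
  case True
  then show ?thesis using assms by (intro exI[of _ "m - 1"]) auto
next
  case False
  then have xl: "x < real m" using assms by simp
  let ?j = "nat \<lfloor>x\<rfloor>"
  have "real ?j \<le> x" using assms(1) by linarith
  moreover have "x \<le> real ?j + 1" using assms(1) by linarith
  moreover have "?j < m" using xl assms(1) by linarith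
  ultimately show ?thesis by blast
qed

lemma edge_path_on_edge:
  "j < length L - 1 \<Longrightarrow> real j \<le> t * real (length L - 1) \<Longrightarrow> t * real (length L - 1) \<le> real j + 1
   \<Longrightarrow> \<exists>s. 0 \<le> s \<and> s \<le> 1 \<and> edge_path L t = edge_pt (L!j) (L!Suc j) s"
proof (induction L t arbitrary: j rule: edge_path.induct)
  case (3 a b L t)
  let ?m = "real (Suc (length L))"
  have hm: "real j \<le> t * ?m" "t * ?m \<le> real j + 1" using 3(3,4) by simp_all
  show ?case
  proof (cases j)
    case 0
    then have le: "t * ?m \<le> 1" using hm by simp
    show ?thesis using le 0 clamp01_range[of "t * ?m"]
      by (intro exI[of _ "clamp01 (t * ?m)"]) (simp add: edge_seg_def)
  next
    case (Suc j')
    show ?thesis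
    proof (cases "t * ?m \<le> 1")
      case True
      then have tm1: "t * ?m = 1" using hm Suc by simp
      then have j0: "j' = 0" using hm Suc by simp
      moreover have "L \<noteq> []" using 3(2) Suc by (cases L) auto
      ultimately show ?thesis using Suc True tm1
        by (intro exI[of _ 0]) (auto simp: edge_seg_def neq_Nil_conv)
    next
      case False
      have Lp: "0 < length L" using 3(2) Suc by (cases L) auto
      let ?t = "(t * ?m - 1) / real (length L)"
      have e1: "?t * real (length L) = t * ?m - 1" using Lp by simp
      have Lne: "L \<noteq> []" using Lp by (cases L) auto
      have "\<exists>s. 0 \<le> s \<and> s \<le> 1 \<and> edge_path (b # L) ?t = edge_pt ((b # L) ! j') ((b # L) ! Suc j') s"
        apply (rule 3(1)[OF False])
        using 3(2) Suc hm e1 Lne by (simp_all add: of_nat_Suc)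
      then show ?thesis using False Suc by simp
    qed
  qed
qed auto

lemma edge_path_at_vertex:
  "L \<noteq> [] \<Longrightarrow> k \<le> length L - 1 \<Longrightarrow> t * real (length L - 1) = real k \<Longrightarrow> edge_path L t = vertex_pt (L!k)"
proof (induction L t arbitrary: k rule: edge_path.induct)
  case (3 a b L t)
  let ?m = "real (Suc (length L))"
  have hm: "t * ?m = real k" using 3(4) by simp
  show ?case
  proof (cases "k \<le> 1")
    case True
    then show ?thesis using hm
      by (cases k) (auto simp: edge_seg_def)
  next
    case False
    then obtain k' where k': "k = Suc k'" "1 \<le> k'" by (cases k) auto
    have F: "\<not> t * ?m \<le> 1" using hm False by simp
    have Lp: "0 < length L" using 3(3) k' by (cases L) auto
    have Lne: "L \<noteq> []" using Lp by (cases L) auto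
    let ?t = "(t * ?m - 1) / real (length L)"
    have "edge_path (b # L) ?t = vertex_pt ((b # L) ! k')"
      apply (rule 3(1)[OF F])
      using 3(3) k' hm Lp Lne by (simp_all add: of_nat_Suc)
    then show ?thesis using F k' by simp
  qed
qed auto

definition edge_chain :: "('a, 'b) monoid_scheme \<Rightarrow> 'a set \<Rightarrow> 'a list \<Rightarrow> bool" where
  "edge_chain G S L \<longleftrightarrow> L \<noteq> [] \<and> set L \<subseteq> carrier G \<and> (\<forall>i. Suc i < length L \<longrightarrow> adjeq G S (L!i) (L!Suc i))"

lemma edge_chain_adjeq: "edge_chain G S L \<Longrightarrow> Suc i < length L \<Longrightarrow> adjeq G S (L!i) (L!Suc i)"
  by (auto simp: edge_chain_def)

lemma edge_chain_single[simp]: "edge_chain G S [a] \<longleftrightarrow> a \<in> carrier G"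
  by (auto simp: edge_chain_def)

lemma edge_chain_Cons2[simp]: "edge_chain G S (a # b # L) \<longleftrightarrow> adjeq G S a b \<and> edge_chain G S (b # L)"
proof
  assume c: "edge_chain G S (a # b # L)"
  have "adjeq G S a b" using edge_chain_adjeq[OF c, of 0] by simp
  moreover have "edge_chain G S (b # L)" unfolding edge_chain_def
  proof (intro conjI allI impI)
    show "set (b # L) \<subseteq> carrier G" using c by (simp add: edge_chain_def)
    fix i assume "Suc i < length (b # L)"
    then show "adjeq G S ((b # L) ! i) ((b # L) ! Suc i)" using edge_chain_adjeq[OF c, of "Suc i"] by simp
  qed simp
  ultimately show "adjeq G S a b \<and> edge_chain G S (b # L)" by blast
next
  assume c: "adjeq G S a b \<and> edge_chain G S (b # L)"
  show "edge_chain G S (a # b # L)" unfolding edge_chain_def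
  proof (intro conjI allI impI)
    show "set (a # b # L) \<subseteq> carrier G" using c by (auto simp: edge_chain_def dest: adjeq_carrier)
    fix i assume i: "Suc i < length (a # b # L)"
    show "adjeq G S ((a # b # L) ! i) ((a # b # L) ! Suc i)"
    proof (cases i)
      case 0 then show ?thesis using c by simp
    next
      case (Suc k) then show ?thesis using c i edge_chain_adjeq[of G S "b # L" k] by simp
    qed
  qed simp
qed

lemma edge_chainI:
  assumes L: "length L = Suc N" "0 < N" and adj: "\<And>j. j < N \<Longrightarrow> adjeq G S (L!j) (L!Suc j)"
  shows "edge_chain G S L"
  unfolding edge_chain_def
proof (intro conjI allI impI)
  show "set L \<subseteq> carrier G"
  proof
    fix x assume "x \<in> set L"
    then obtain i where i: "i < Suc N" "L!i = x" using L(1) by (auto simp: in_set_conv_nth)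
    show "x \<in> carrier G"
    proof (cases "i < N")
      case True
      then show ?thesis using adjeq_carrier(1)[OF adj[OF True]] i by simp
    next
      case False
      then have "i = Suc (N - 1)" "N - 1 < N" using i(1) L(2) by auto
      then show ?thesis using adjeq_carrier(2)[OF adj[of "N - 1"]] i by simp
    qed
  qed
qed (use adj L(1) in auto)

lemma edge_path_in_realization:
  assumes "edge_chain G S L" "0 \<le> t" "t \<le> 1"
  shows "edge_path L t \<in> flag_realization G S"
proof (cases "length L - 1 = 0")
  case True
  then obtain a where "L = [a]" using assms(1) by (cases L) (auto simp: edge_chain_def)
  then show ?thesis using assms(1) by (auto intro: vertex_pt_in_realization)
next
  case False
  have x0: "0 \<le> t * real (length L - 1)" using assms(2) by simp
  have x1: "t * real (length L - 1) \<le> real (length L - 1)" using assms(2,3) by (simp add: mult_left_le_one_le)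
  obtain j where j: "j < length L - 1" "real j \<le> t * real (length L - 1)" "t * real (length L - 1) \<le> real j + 1"
    using real_in_unit_block[OF x0 x1] False by auto
  then obtain s where s: "0 \<le> s" "s \<le> 1" "edge_path L t = edge_pt (L!j) (L!Suc j) s"
    using edge_path_on_edge by blast
  have "adjeq G S (L!j) (L!Suc j)" using edge_chain_adjeq[OF assms(1)] j(1) by simp
  then show ?thesis unfolding s(3) by (rule edge_pt_in_realization[OF _ s(1) s(2)])
qed

lemma path_image_edge_path: "edge_chain G S L \<Longrightarrow> path_image (edge_path L) \<subseteq> flag_realization G S"
  unfolding path_image_def by (auto intro!: edge_path_in_realization)

lemma pathstart_edge_path: "L \<noteq> [] \<Longrightarrow> pathstart (edge_path L) = vertex_pt (hd L)"
  by (simp add: pathstart_def edge_path_start)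

lemma pathfinish_edge_path: "L \<noteq> [] \<Longrightarrow> pathfinish (edge_path L) = vertex_pt (last L)"
  by (simp add: pathfinish_def edge_path_end)

lemma pathstart_edge_path_Cons[simp]: "pathstart (edge_path (a # L)) = vertex_pt a"
  by (simp add: pathstart_edge_path)

lemma path_edge_seg: "path (edge_seg a b)" unfolding path_def by (rule continuous_on_edge_seg)

lemma path_image_edge_seg: "adjeq G S a b \<Longrightarrow> path_image (edge_seg a b) \<subseteq> flag_realization G S"
  by (auto simp: path_image_def intro: edge_seg_in_realization)

lemma edge_seg_start[simp]: "pathstart (edge_seg a b) = vertex_pt a" by (simp add: pathstart_def edge_seg_def)

lemma edge_seg_finish[simp]: "pathfinish (edge_seg a b) = vertex_pt b" by (simp add: pathfinish_def edge_seg_def)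

lemma support_edge_seg: "support (edge_seg a b s) \<subseteq> {a, b}" unfolding edge_seg_def by (rule support_edge_pt)

lemma edge_seg_same: "edge_seg a a = (\<lambda>t. vertex_pt a)" by (rule ext) (simp add: edge_seg_def)

definition join_param :: "real \<Rightarrow> real \<Rightarrow> real" where
  "join_param m t = (if t \<le> 1/2 then 2 * t / m else (1 + (2 * t - 1) * (m - 1)) / m)"

lemma join_param:
  assumes m: "1 \<le> m"
  shows "continuous_on {0..1} (join_param m)" "join_param m \<in> {0..1} \<rightarrow> {0..1}"
    "join_param m 0 = 0" "join_param m 1 = 1"
proof -
  have m0: "m \<noteq> 0" using m by simp
  show "continuous_on {0..1} (join_param m)" unfolding join_param_def
  proof (rule continuous_on_cases_le[where h = "\<lambda>t. t"])
    fix t :: real assume t: "t = 1/2"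
    show "2 * t / m = (1 + (2 * t - 1) * (m - 1)) / m" unfolding t by simp
  qed (use m0 in \<open>auto intro!: continuous_intros\<close>)
  show "join_param m \<in> {0..1} \<rightarrow> {0..1}"
  proof
    fix t :: real assume t: "t \<in> {0..1}"
    show "join_param m t \<in> {0..1}"
    proof (cases "t \<le> 1/2")
      case True
      then show ?thesis using t m by (simp add: join_param_def)
    next
      case False
      have "(2 * t - 1) * (m - 1) \<le> m - 1" using t m False by (intro mult_left_le_one_le) auto
      moreover have "0 \<le> (2 * t - 1) * (m - 1)" using False m by simp
      ultimately show ?thesis using False m by (simp add: join_param_def)
    qed
  qed
  show "join_param m 0 = 0" "join_param m 1 = 1" using m0 by (simp_all add: join_param_def)
qed

lemma edge_path_Cons_homotopic:
  assumes "edge_chain G S (a # b # L)"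
  shows "homotopic_paths (flag_realization G S) (edge_path (a # b # L)) (edge_seg a b +++ edge_path (b # L))"
proof -
  define m where "m = real (Suc (length L))"
  have m: "1 \<le> m" by (simp add: m_def)
  have eq: "(edge_seg a b +++ edge_path (b # L)) t = edge_path (a # b # L) (join_param m t)"
    if t: "t \<in> {0..1}" for t
  proof (cases "t \<le> 1/2")
    case True
    then show ?thesis by (simp add: joinpaths_def join_param_def m_def)
  next
    case False
    have fm: "join_param m t * real (Suc (length L)) = 1 + (2 * t - 1) * real (length L)"
      using False by (simp add: join_param_def m_def)
    show ?thesis
    proof (cases "L = []")
      case True
      then show ?thesis using False fm by (simp add: joinpaths_def edge_seg_def)
    next
      case nL: False
      then have "0 < (2 * t - 1) * real (length L)" using False by simp
      then have "\<not> 1 + (2 * t - 1) * real (length L) \<le> 1" by simp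
      moreover have "(1 + (2 * t - 1) * real (length L) - 1) / real (length L) = 2 * t - 1"
        using nL by simp
      ultimately show ?thesis using False fm by (simp add: joinpaths_def)
    qed
  qed
  show ?thesis
    by (rule homotopic_paths_reparametrize[OF path_edge_path path_image_edge_path[OF assms] join_param[OF m]])
       (use eq in auto)
qed

lemma homotopic_paths_const_join:
  assumes "path p" "path_image p \<subseteq> T" "pathstart p = c"
  shows "homotopic_paths T ((\<lambda>t. c) +++ p) p"
proof -
  define f where "f = (\<lambda>t::real. if t \<le> 1/2 then 0 else 2 * t - 1)"
  have cf: "continuous_on {0..1} f" unfolding f_def
    by (rule continuous_on_cases_le[where h = "\<lambda>t. t"]) (auto intro!: continuous_intros)
  have f01: "f \<in> {0..1} \<rightarrow> {0..1}" by (auto simp: f_def)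
  have "homotopic_paths T p ((\<lambda>t. c) +++ p)"
    by (rule homotopic_paths_reparametrize[OF assms(1,2) cf f01])
       (use assms(3) in \<open>auto simp: f_def joinpaths_def pathstart_def\<close>)
  then show ?thesis by (rule homotopic_paths_sym)
qed

section \<open>Elementary moves of edge paths\<close>

inductive flag_move :: "('a, 'b) monoid_scheme \<Rightarrow> 'a set \<Rightarrow> 'a list \<Rightarrow> 'a list \<Rightarrow> bool" for G S where
  ins: "flag_tri G S a b c \<Longrightarrow> flag_move G S (pre @ [a, c] @ post) (pre @ [a, b, c] @ post)"
| dup: "a \<in> carrier G \<Longrightarrow> flag_move G S (pre @ [a] @ post) (pre @ [a, a] @ post)"

definition flag_equiv :: "('a, 'b) monoid_scheme \<Rightarrow> 'a set \<Rightarrow> 'a list \<Rightarrow> 'a list \<Rightarrow> bool" where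
  "flag_equiv G S = (\<lambda>x y. flag_move G S x y \<or> flag_move G S y x)\<^sup>*\<^sup>*"

lemma flag_equiv_refl[simp]: "flag_equiv G S L L" by (simp add: flag_equiv_def)

lemma flag_equiv_sym: "flag_equiv G S L L' \<Longrightarrow> flag_equiv G S L' L"
  using rtranclp_symclp_sym[of "flag_move G S" L L'] by (simp add: flag_equiv_def symclp_def[abs_def])

lemma flag_equiv_trans: "flag_equiv G S L1 L2 \<Longrightarrow> flag_equiv G S L2 L3 \<Longrightarrow> flag_equiv G S L1 L3"
  unfolding flag_equiv_def by (rule rtranclp_trans)

lemma flag_move_imp_equiv: "flag_move G S L L' \<Longrightarrow> flag_equiv G S L L'"
  unfolding flag_equiv_def by auto

lemma flag_move_context: "flag_move G S L L' \<Longrightarrow> flag_move G S (pre @ L @ post) (pre @ L' @ post)"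
proof (induction rule: flag_move.induct)
  case (ins a b c pre' post')
  then show ?case using flag_move.ins[of G S a b c "pre @ pre'" "post' @ post"] by simp
next
  case (dup a pre' post')
  then show ?case using flag_move.dup[of a G S "pre @ pre'" "post' @ post"] by simp
qed

lemma flag_equiv_context: "flag_equiv G S L L' \<Longrightarrow> flag_equiv G S (pre @ L @ post) (pre @ L' @ post)"
  unfolding flag_equiv_def
proof (induction rule: rtranclp_induct)
  case (step y z)
  then show ?case using flag_move_context[of G S y z pre post] flag_move_context[of G S z y pre post]
    by (metis (no_types, lifting) rtranclp.rtrancl_into_rtrancl)
qed simp

lemma edge_chain_append:
  "xs \<noteq> [] \<Longrightarrow> ys \<noteq> [] \<Longrightarrow> edge_chain G S (xs @ ys) \<longleftrightarrow> edge_chain G S xs \<and> edge_chain G S ys \<and> adjeq G S (last xs) (hd ys)"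
proof (induction xs rule: induct_list012)
  case (2 x)
  then obtain y ys' where ys: "ys = y # ys'" by (cases ys) auto
  show ?case unfolding ys by (auto dest: adjeq_carrier)
next
  case (3 x y zs)
  then show ?case by auto
qed simp

lemma edge_chain_replace:
  assumes "edge_chain G S (pre @ M @ post)" "edge_chain G S M'" "hd M' = hd M" "last M' = last M" "M \<noteq> []" "M' \<noteq> []"
  shows "edge_chain G S (pre @ M' @ post)"
proof -
  have A: "edge_chain G S (M @ post)" and B: "edge_chain G S (M' @ post)"
  proof -
    show "edge_chain G S (M @ post)"
    proof (cases "pre = []")
      case True then show ?thesis using assms(1) by simp
    next
      case False then show ?thesis using assms(1) edge_chain_append[of pre "M @ post" G S] assms(5) by simp
    qed
    then show "edge_chain G S (M' @ post)"
      using assms edge_chain_append[of M post G S] edge_chain_append[of M' post G S] by (cases "post = []") auto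
  qed
  show ?thesis
  proof (cases "pre = []")
    case True then show ?thesis using B by simp
  next
    case False
    then show ?thesis using assms(1) edge_chain_append[of pre "M @ post" G S] edge_chain_append[of pre "M' @ post" G S] assms(3,5,6) B
      by simp
  qed
qed

lemma flag_tri_edge_chain3: "flag_tri G S a b c \<Longrightarrow> edge_chain G S [a, b, c]"
  by (auto simp: flag_tri_def dest: adjeq_carrier)

lemma flag_tri_edge_chain2: "flag_tri G S a b c \<Longrightarrow> edge_chain G S [a, c]"
  by (auto simp: flag_tri_def dest: adjeq_carrier)

lemma flag_move_edge_chain: "flag_move G S L L' \<Longrightarrow> edge_chain G S L \<longleftrightarrow> edge_chain G S L'"
proof (induction rule: flag_move.induct)
  case (ins a b c pre post)
  show ?case
    using edge_chain_replace[of G S pre "[a, c]" post "[a, b, c]"] edge_chain_replace[of G S pre "[a, b, c]" post "[a, c]"]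
      flag_tri_edge_chain2[OF ins] flag_tri_edge_chain3[OF ins] by auto
next
  case (dup a pre post)
  have "edge_chain G S [a, a]" "edge_chain G S [a]" using dup by (auto intro: adjeq_refl)
  then show ?case
    using edge_chain_replace[of G S pre "[a]" post "[a, a]"] edge_chain_replace[of G S pre "[a, a]" post "[a]"] by auto
qed

lemma edge_chain_suffix: "edge_chain G S (pre @ M @ post) \<Longrightarrow> M \<noteq> [] \<Longrightarrow> edge_chain G S (M @ post)"
  using edge_chain_append[of pre "M @ post" G S] by (cases "pre = []") auto

lemma homotopic_edge_path_context:
  assumes base: "homotopic_paths (flag_realization G S) (edge_path (M @ post)) (edge_path (M' @ post))"
    and "edge_chain G S (pre @ M @ post)" "edge_chain G S (pre @ M' @ post)" "hd M = hd M'" "M \<noteq> []" "M' \<noteq> []"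
  shows "homotopic_paths (flag_realization G S) (edge_path (pre @ M @ post)) (edge_path (pre @ M' @ post))"
  using assms(2,3)
proof (induction pre)
  case Nil then show ?case using base by simp
next
  case (Cons x pre)
  let ?T = "pre @ M @ post" and ?T' = "pre @ M' @ post"
  obtain y T1 where T: "?T = y # T1" using assms(5) by (cases ?T) auto
  obtain y' T1' where T': "?T' = y' # T1'" using assms(6) by (cases ?T') auto
  have "hd ?T = hd ?T'" using assms(4,5,6) by (cases pre) (simp_all add: hd_append)
  then have yy: "y' = y" using T T' by simp
  have c1: "edge_chain G S (x # y # T1)" using Cons(2) T by simp
  have c2: "edge_chain G S (x # y # T1')" using Cons(3) T' yy by simp
  have cT: "edge_chain G S ?T" using c1 T by simp
  have cT': "edge_chain G S ?T'" using c2 T' yy by simp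
  have IH: "homotopic_paths (flag_realization G S) (edge_path ?T) (edge_path ?T')"
    using Cons.IH cT cT' by simp
  have h1: "homotopic_paths (flag_realization G S) (edge_path (x # y # T1)) (edge_seg x y +++ edge_path (y # T1))"
    by (rule edge_path_Cons_homotopic[OF c1])
  have h2: "homotopic_paths (flag_realization G S) (edge_path (x # y # T1')) (edge_seg x y +++ edge_path (y # T1'))"
    by (rule edge_path_Cons_homotopic[OF c2])
  have exy: "adjeq G S x y" using c1 by simp
  have h3: "homotopic_paths (flag_realization G S) (edge_seg x y +++ edge_path (y # T1)) (edge_seg x y +++ edge_path (y # T1'))"
    by (rule homotopic_paths_join) (use IH T T' yy exy path_edge_seg path_image_edge_seg[OF exy] in auto)
  have "homotopic_paths (flag_realization G S) (edge_path (x # y # T1)) (edge_path (x # y # T1'))"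
    using h1 h2 h3 by (meson homotopic_paths_sym homotopic_paths_trans)
  then show ?case using T T' yy by (simp del: edge_path.simps)
qed

lemma homotopic_edge_path_insert:
  assumes t: "flag_tri G S a b c" and ch: "edge_chain G S (c # post)"
  shows "homotopic_paths (flag_realization G S) (edge_path (a # c # post)) (edge_path (a # b # c # post))"
proof -
  let ?X = "flag_realization G S"
  have eab: "adjeq G S a b" and ebc: "adjeq G S b c" and eac: "adjeq G S a c" using t by (auto simp: flag_tri_def)
  have c1: "edge_chain G S (a # c # post)" using eac ch by simp
  have c3: "edge_chain G S (b # c # post)" using ebc ch by simp
  have c2: "edge_chain G S (a # b # c # post)" using eab c3 by simp
  have h1: "homotopic_paths ?X (edge_path (a # c # post)) (edge_seg a c +++ edge_path (c # post))" by (rule edge_path_Cons_homotopic[OF c1])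
  have h2: "homotopic_paths ?X (edge_path (a # b # c # post)) (edge_seg a b +++ edge_path (b # c # post))" by (rule edge_path_Cons_homotopic[OF c2])
  have h3: "homotopic_paths ?X (edge_path (b # c # post)) (edge_seg b c +++ edge_path (c # post))" by (rule edge_path_Cons_homotopic[OF c3])
  have pe: "path (edge_path (c # post))" "path_image (edge_path (c # post)) \<subseteq> ?X" using ch by (auto simp: path_edge_path path_image_edge_path)
  have h4: "homotopic_paths ?X (edge_seg a b +++ edge_path (b # c # post)) (edge_seg a b +++ (edge_seg b c +++ edge_path (c # post)))"
    by (rule homotopic_paths_join) (use h3 eab path_edge_seg path_image_edge_seg[OF eab] pathstart_edge_path[of "b # c # post"] in auto)
  have h5: "homotopic_paths ?X (edge_seg a b +++ (edge_seg b c +++ edge_path (c # post))) ((edge_seg a b +++ edge_seg b c) +++ edge_path (c # post))"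
    by (rule homotopic_paths_assoc) (use pe path_edge_seg path_image_edge_seg[OF eab] path_image_edge_seg[OF ebc] pathstart_edge_path in auto)
  have h6: "homotopic_paths ?X (edge_seg a c) (edge_seg a b +++ edge_seg b c)"
  proof (rule homotopic_paths_straight)
    show "path (edge_seg a c)" "path (edge_seg a b +++ edge_seg b c)" by (auto simp: path_edge_seg)
    show "path_image (edge_seg a c) \<subseteq> ?X" by (rule path_image_edge_seg[OF eac])
    show "path_image (edge_seg a b +++ edge_seg b c) \<subseteq> ?X"
      using path_image_join_subset[of "edge_seg a b" "edge_seg b c"] path_image_edge_seg[OF eab] path_image_edge_seg[OF ebc] by auto
    show "pathstart (edge_seg a b +++ edge_seg b c) = pathstart (edge_seg a c)" "pathfinish (edge_seg a b +++ edge_seg b c) = pathfinish (edge_seg a c)"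
      by auto
    fix t :: real assume "t \<in> {0..1}"
    have "support (edge_seg a c t) \<union> support ((edge_seg a b +++ edge_seg b c) t) \<subseteq> {a, b, c}"
      using support_edge_seg[of a c t] support_edge_seg[of a b "2 * t"] support_edge_seg[of b c "2 * t - 1"]
      by (auto simp: joinpaths_def)
    moreover have "support (edge_seg a c t) \<noteq> {}" using realization_support_nonempty[OF edge_seg_in_realization[OF eac]] by blast
    ultimately show "flag_simplex G S (support (edge_seg a c t) \<union> support ((edge_seg a b +++ edge_seg b c) t))"
      using flag_simplex_subset[OF flag_simplex_triangle[OF t]] by blast
  qed
  have h7: "homotopic_paths ?X (edge_seg a c +++ edge_path (c # post)) ((edge_seg a b +++ edge_seg b c) +++ edge_path (c # post))"
    by (rule homotopic_paths_join) (use h6 pe pathstart_edge_path in auto)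
  show ?thesis using h1 h2 h4 h5 h7 by (meson homotopic_paths_sym homotopic_paths_trans)
qed

lemma homotopic_edge_path_dup:
  assumes ch: "edge_chain G S (a # post)"
  shows "homotopic_paths (flag_realization G S) (edge_path (a # post)) (edge_path (a # a # post))"
proof -
  let ?X = "flag_realization G S"
  have a: "a \<in> carrier G" using ch by (simp add: edge_chain_def)
  have c2: "edge_chain G S (a # a # post)" using ch a by (simp add: adjeq_refl)
  have h1: "homotopic_paths ?X (edge_path (a # a # post)) ((\<lambda>t. vertex_pt a) +++ edge_path (a # post))"
    using edge_path_Cons_homotopic[OF c2] by (simp add: edge_seg_same)
  have h2: "homotopic_paths ?X ((\<lambda>t. vertex_pt a) +++ edge_path (a # post)) (edge_path (a # post))"
    by (rule homotopic_paths_const_join) (use ch in \<open>auto simp: path_edge_path path_image_edge_path pathstart_edge_path\<close>)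
  show ?thesis using h1 h2 by (meson homotopic_paths_sym homotopic_paths_trans)
qed

lemma flag_move_homotopic: "flag_move G S L L' \<Longrightarrow> edge_chain G S L \<Longrightarrow> homotopic_paths (flag_realization G S) (edge_path L) (edge_path L')"
proof (induction rule: flag_move.induct)
  case (ins a b c pre post)
  have ch': "edge_chain G S (pre @ [a, b, c] @ post)" using flag_move_edge_chain[OF flag_move.ins[OF ins(1)]] ins(2) by blast
  have "edge_chain G S ([a, c] @ post)" using edge_chain_suffix[OF ins(2)] by simp
  then have "edge_chain G S (c # post)" by simp
  then have "homotopic_paths (flag_realization G S) (edge_path ([a, c] @ post)) (edge_path ([a, b, c] @ post))"
    using homotopic_edge_path_insert[OF ins(1)] by simp
  then show ?case by (rule homotopic_edge_path_context) (use ins(2) ch' in auto)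
next
  case (dup a pre post)
  have ch': "edge_chain G S (pre @ [a, a] @ post)" using flag_move_edge_chain[OF flag_move.dup[OF dup(1)]] dup(2) by blast
  have "edge_chain G S ([a] @ post)" using edge_chain_suffix[OF dup(2)] by simp
  then have "homotopic_paths (flag_realization G S) (edge_path ([a] @ post)) (edge_path ([a, a] @ post))"
    using homotopic_edge_path_dup by simp
  then show ?case by (rule homotopic_edge_path_context) (use dup(2) ch' in auto)
qed

lemma flag_equiv_homotopic:
  "flag_equiv G S L L' \<Longrightarrow> edge_chain G S L \<Longrightarrow> edge_chain G S L' \<and> homotopic_paths (flag_realization G S) (edge_path L) (edge_path L')"
  unfolding flag_equiv_def
proof (induction rule: rtranclp_induct)
  case base
  then show ?case by (simp add: path_edge_path path_image_edge_path)
next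
  case (step y z)
  then have cy: "edge_chain G S y" and hy: "homotopic_paths (flag_realization G S) (edge_path L) (edge_path y)" by auto
  from step(2) show ?case
  proof
    assume m: "flag_move G S y z"
    then have cz: "edge_chain G S z" using flag_move_edge_chain cy by blast
    show ?thesis using cz hy flag_move_homotopic[OF m cy] by (meson homotopic_paths_trans)
  next
    assume m: "flag_move G S z y"
    then have cz: "edge_chain G S z" using flag_move_edge_chain cy by blast
    show ?thesis using cz hy flag_move_homotopic[OF m cz] by (meson homotopic_paths_sym homotopic_paths_trans)
  qed
qed

lemma flag_equiv_edge_chain: "flag_equiv G S L L' \<Longrightarrow> edge_chain G S L \<Longrightarrow> edge_chain G S L'"
  using flag_equiv_homotopic by blast

lemma flag_tri_perm:
  assumes "flag_tri G S a b c"
  shows "flag_tri G S b a c" "flag_tri G S a c b" "flag_tri G S c b a" "flag_tri G S b c a" "flag_tri G S c a b"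
  using assms by (auto simp: flag_tri_def intro: adjeq_sym)

lemma flag_tri_back: "adjeq G S a b \<Longrightarrow> flag_tri G S a b a"
  by (auto simp: flag_tri_def intro: adjeq_sym adjeq_refl dest: adjeq_carrier)

lemma flag_move_imp_equiv_rev: "flag_move G S L L' \<Longrightarrow> flag_equiv G S L' L"
  by (rule flag_equiv_sym[OF flag_move_imp_equiv])

lemma flag_equiv_replace:
  assumes "0 < j" "Suc j < length L" "flag_tri G S (L!(j-1)) (L!j) b" "flag_tri G S (L!j) b (L!Suc j)"
  shows "flag_equiv G S L (L[j := b])"
proof -
  let ?pre = "take (j - 1) L" and ?post = "drop (Suc (Suc j)) L"
  let ?x = "L!(j-1)" and ?a = "L!j" and ?y = "L!Suc j"
  have jl: "j < length L" using assms(2) by simp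
  have d1: "drop j L = L!j # drop (Suc j) L" using Cons_nth_drop_Suc[OF jl] by simp
  have d2: "drop (Suc j) L = L!Suc j # drop (Suc (Suc j)) L" using Cons_nth_drop_Suc[OF assms(2)] by simp
  have tk: "take j L = take (j - 1) L @ [L!(j-1)]"
    using take_Suc_conv_app_nth[of "j - 1" L] assms(1,2) by simp
  have L: "L = ?pre @ [?x, ?a, ?y] @ ?post"
    using append_take_drop_id[of j L] d1 d2 tk by simp
  have L': "L[j := b] = ?pre @ [?x, b, ?y] @ ?post"
    using upd_conv_take_nth_drop[OF jl, of b] d2 tk by simp
  have t1: "flag_tri G S ?x ?a b" and t2: "flag_tri G S ?a b ?y" using assms(3,4) by auto
  have eab: "adjeq G S ?a b" and ac: "?a \<in> carrier G" using t1 by (auto simp: flag_tri_def dest: adjeq_carrier)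
  have m1: "flag_move G S ([?x] @ [?a] @ [?y]) ([?x] @ [?a, ?a] @ [?y])" by (rule flag_move.dup[OF ac])
  have m2: "flag_move G S ([?x] @ [?a, ?a] @ [?y]) ([?x] @ [?a, b, ?a] @ [?y])" by (rule flag_move.ins[OF flag_tri_back[OF eab]])
  have m3: "flag_move G S ([] @ [?x, b] @ [?a, ?y]) ([] @ [?x, ?a, b] @ [?a, ?y])" by (rule flag_move.ins[OF t1])
  have m4: "flag_move G S ([?x] @ [b, ?y] @ []) ([?x] @ [b, ?a, ?y] @ [])" by (rule flag_move.ins[OF flag_tri_perm(1)[OF t2]])
  have "flag_equiv G S [?x, ?a, ?y] [?x, b, ?y]"
  proof -
    have "flag_equiv G S [?x, ?a, ?y] [?x, ?a, ?a, ?y]" using flag_move_imp_equiv[OF m1] by simp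
    moreover have "flag_equiv G S [?x, ?a, ?a, ?y] [?x, ?a, b, ?a, ?y]" using flag_move_imp_equiv[OF m2] by simp
    moreover have "flag_equiv G S [?x, ?a, b, ?a, ?y] [?x, b, ?a, ?y]" using flag_move_imp_equiv_rev[OF m3] by simp
    moreover have "flag_equiv G S [?x, b, ?a, ?y] [?x, b, ?y]" using flag_move_imp_equiv_rev[OF m4] by simp
    ultimately show ?thesis by (blast intro: flag_equiv_trans)
  qed
  then have "flag_equiv G S (?pre @ [?x, ?a, ?y] @ ?post) (?pre @ [?x, b, ?y] @ ?post)" by (rule flag_equiv_context)
  then show ?thesis using L L' by simp
qed

lemma null_loop_shift_base:
  assumes null: "flag_equiv G S ([a] @ mid @ [a]) [a]" and ne: "mid \<noteq> []"
    and t1: "flag_tri G S (last mid) a b" and t2: "flag_tri G S a b (hd mid)"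
  shows "flag_equiv G S ([b] @ mid @ [b]) [b]"
proof -
  obtain y mid1 where m1: "mid = y # mid1" using ne by (cases mid) auto
  obtain mid2 x where m2: "mid = mid2 @ [x]" using ne by (cases mid rule: rev_cases) auto
  have tx: "flag_tri G S x a b" using t1 m2 by simp
  have ty: "flag_tri G S b a y" using flag_tri_perm(1)[OF t2] m1 by simp
  have s1: "flag_move G S ([] @ [b, y] @ (mid1 @ [b])) ([] @ [b, a, y] @ (mid1 @ [b]))" by (rule flag_move.ins[OF ty])
  have s2: "flag_move G S (([b, a] @ mid2) @ [x, b] @ []) (([b, a] @ mid2) @ [x, a, b] @ [])" by (rule flag_move.ins[OF tx])
  have e1: "flag_equiv G S ([b] @ mid @ [b]) ([b, a] @ mid @ [b])" using flag_move_imp_equiv[OF s1] m1 by simp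
  have e2: "flag_equiv G S ([b, a] @ mid @ [b]) ([b] @ ([a] @ mid @ [a]) @ [b])" using flag_move_imp_equiv[OF s2] m2 by simp
  have e3: "flag_equiv G S ([b] @ ([a] @ mid @ [a]) @ [b]) ([b] @ [a] @ [b])" by (rule flag_equiv_context[OF null])
  have eab0: "adjeq G S a b" using t1 by (simp add: flag_tri_def)
  have eb: "adjeq G S b a" and bc: "b \<in> carrier G" using adjeq_sym[OF eab0] adjeq_carrier(2)[OF eab0] by auto
  have s3: "flag_move G S ([] @ [b, b] @ []) ([] @ [b, a, b] @ [])" by (rule flag_move.ins[OF flag_tri_back[OF eb]])
  have s4: "flag_move G S ([] @ [b] @ []) ([] @ [b, b] @ [])" by (rule flag_move.dup[OF bc])
  have e4: "flag_equiv G S ([b] @ [a] @ [b]) [b]"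
    using flag_equiv_trans[OF flag_move_imp_equiv_rev[OF s3] flag_move_imp_equiv_rev[OF s4]] by simp
  show ?thesis using e1 e2 e3 e4 by (blast intro: flag_equiv_trans)
qed

lemma flag_equiv_replicate: "c \<in> carrier G \<Longrightarrow> flag_equiv G S (replicate (Suc n) c) [c]"
proof (induction n)
  case (Suc n)
  have m: "flag_move G S ([] @ [c] @ replicate n c) ([] @ [c, c] @ replicate n c)" by (rule flag_move.dup[OF Suc(2)])
  have "flag_equiv G S (replicate (Suc (Suc n)) c) (replicate (Suc n) c)" using flag_move_imp_equiv_rev[OF m] by simp
  then show ?case using Suc by (blast intro: flag_equiv_trans)
qed simp

lemma flag_equiv_two_vertices:
  assumes e: "adjeq G S a b" and Y: "set Y \<subseteq> {a, b}" and c: "c \<in> {a, b}"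
  shows "flag_equiv G S (c # Y @ [b]) [c, b]"
  using Y c
proof (induction Y arbitrary: c)
  case (Cons d Y)
  have IH: "flag_equiv G S (d # Y @ [b]) [d, b]" using Cons by simp
  have "flag_equiv G S ([c] @ (d # Y @ [b]) @ []) ([c] @ [d, b] @ [])" by (rule flag_equiv_context[OF IH])
  then have A: "flag_equiv G S (c # d # Y @ [b]) [c, d, b]" by simp
  have ac: "a \<in> carrier G" "b \<in> carrier G" using e by (auto dest: adjeq_carrier)
  have eba: "adjeq G S b a" using adjeq_sym[OF e] .
  have dd: "d \<in> {a, b}" using Cons(2) by simp
  have "flag_tri G S c d b" unfolding flag_tri_def using Cons(3) dd e eba ac by (auto intro: adjeq_refl)
  then have "flag_move G S ([] @ [c, b] @ []) ([] @ [c, d, b] @ [])" by (rule flag_move.ins)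
  then have B: "flag_equiv G S [c, d, b] [c, b]" using flag_move_imp_equiv_rev by fastforce
  show ?case using flag_equiv_trans[OF A B] by simp
qed simp

text \<open>X walks along V, spending K steps on each edge.\<close>

definition subdivides :: "nat \<Rightarrow> 'a list \<Rightarrow> 'a list \<Rightarrow> bool" where
  "subdivides K X V \<longleftrightarrow> length X = (length V - 1) * K \<and>
     (\<forall>j < length X. X!j = V!(j div K) \<or> X!j = V!(Suc (j div K))) \<and>
     (\<forall>k < length V - 1. X!(k * K) = V!k)"

lemma subdivides_drop:
  assumes sub: "subdivides K X (v # V)" and K: "0 < K"
  shows "subdivides K (drop K X) V"
  unfolding subdivides_def
proof (intro conjI allI impI)
  have lX: "length X = length V * K" using sub by (simp add: subdivides_def)
  then show "length (drop K X) = (length V - 1) * K" by (simp add: diff_mult_distrib)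
  fix j assume "j < length (drop K X)"
  then have jK: "j + K < length X" using lX by simp
  then have "X!(j + K) = (v # V)!((j + K) div K) \<or> X!(j + K) = (v # V)!(Suc ((j + K) div K))"
    using sub unfolding subdivides_def by blast
  moreover have "(j + K) div K = Suc (j div K)" using K by simp
  ultimately show "drop K X ! j = V ! (j div K) \<or> drop K X ! j = V ! Suc (j div K)"
    using jK by (simp add: add.commute)
next
  fix k assume k: "k < length V - 1"
  have lX: "length X = length V * K" using sub by (simp add: subdivides_def)
  have "\<forall>k < length (v # V) - 1. X!(k * K) = (v # V)!k"
    using sub unfolding subdivides_def by blast
  from this[rule_format, of "Suc k"] have "X!(K + k * K) = V!k" using k by simp
  moreover have "K \<le> length X" using k lX by (cases "length V") auto
  ultimately show "drop K X ! (k * K) = V ! k" by simp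
qed

lemma subdivides_first_block:
  assumes sub: "subdivides K X (v0 # v1 # V)" and K: "0 < K"
  obtains Y where "take K X = v0 # Y" "set Y \<subseteq> {v0, v1}"
proof -
  have lX: "K \<le> length X" using sub by (simp add: subdivides_def)
  have "\<forall>k < length (v0 # v1 # V) - 1. X!(k * K) = (v0 # v1 # V)!k"
    using sub unfolding subdivides_def by blast
  from this[rule_format, of 0] have "X!0 = v0" by simp
  moreover have ne: "take K X \<noteq> []" using lX K by (cases X) auto
  ultimately have "hd (take K X) = v0" using K by (simp add: hd_conv_nth)
  define Y where "Y = tl (take K X)"
  have Y: "take K X = v0 # Y" unfolding Y_def using ne \<open>hd (take K X) = v0\<close> by (metis list.collapse)
  have "set Y \<subseteq> {v0, v1}"
  proof
    fix z assume "z \<in> set Y"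
    then obtain i where i: "i < length Y" "Y ! i = z" by (auto simp: in_set_conv_nth)
    have "Suc (length Y) = K" using arg_cong[OF Y, of length] lX by simp
    then have iK: "Suc i < K" using i by simp
    then have "X ! Suc i = z" using arg_cong[OF Y, of "\<lambda>xs. xs ! Suc i"] i by simp
    moreover have "\<forall>j < length X. X!j = (v0 # v1 # V)!(j div K) \<or> X!j = (v0 # v1 # V)!(Suc (j div K))"
      using sub unfolding subdivides_def by blast
    ultimately show "z \<in> {v0, v1}" using iK lX by (auto dest: spec[of _ "Suc i"])
  qed
  then show ?thesis using that Y by blast
qed

lemma flag_equiv_subdivision:
  assumes "edge_chain G S V" "subdivides K X V" "0 < K"
  shows "flag_equiv G S (X @ [last V]) V"
  using assms
proof (induction V arbitrary: X rule: induct_list012)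
  case 1
  then show ?case by (simp add: edge_chain_def)
next
  case (2 v)
  then show ?case by (simp add: subdivides_def)
next
  case (3 v0 v1 V)
  have "edge_chain G S (v1 # V)" using 3(3) by simp
  then have IH: "flag_equiv G S (drop K X @ [last (v1 # V)]) (v1 # V)"
    by (rule 3(2)[OF _ subdivides_drop[OF 3(4,5)] 3(5)])
  obtain Y where Y: "take K X = v0 # Y" "set Y \<subseteq> {v0, v1}"
    using subdivides_first_block[OF 3(4,5)] .
  have e01: "adjeq G S v0 v1" using 3(3) by simp
  have "flag_equiv G S ([] @ (v0 # Y @ [v1]) @ V) ([] @ [v0, v1] @ V)"
    by (rule flag_equiv_context[OF flag_equiv_two_vertices[OF e01 Y(2)]]) simp
  then have A: "flag_equiv G S (take K X @ v1 # V) (v0 # v1 # V)" using Y by simp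
  have "flag_equiv G S (take K X @ (drop K X @ [last (v1 # V)]) @ []) (take K X @ (v1 # V) @ [])"
    by (rule flag_equiv_context[OF IH])
  then have "flag_equiv G S (X @ [last (v0 # v1 # V)]) (take K X @ v1 # V)"
    by (simp add: append_assoc[symmetric] del: append_assoc)
  then show ?case using flag_equiv_trans A by blast
qed

section \<open>Words and free reduction\<close>

text \<open>Free equivalence of words over S may pass through letters outside S; deleting those
  letters turns each free reduction step into a free reduction step or an equality.\<close>

definition restrict_word :: "'a set \<Rightarrow> 'a word \<Rightarrow> 'a word" where
  "restrict_word S w = filter (\<lambda>l. fst l \<in> S) w"

lemma free_red_context: "free_red a b \<Longrightarrow> free_red (c @ a @ d) (c @ b @ d)"
  unfolding free_red_def
proof (elim exE conjE)
  fix p q x assume "a = p @ [x, inv_letter x] @ q" "b = p @ q"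
  then show "\<exists>p q x. c @ a @ d = p @ [x, inv_letter x] @ q \<and> c @ b @ d = p @ q"
    by (intro exI[of _ "c @ p"] exI[of _ "q @ d"] exI[of _ x]) simp
qed

lemma free_redI: "free_red (p @ [x, inv_letter x] @ q) (p @ q)"
  unfolding free_red_def by blast

lemma free_eq_refl[simp]: "free_eq w w" by (simp add: free_eq_def)

lemma free_eq_sym: "free_eq a b \<Longrightarrow> free_eq b a"
  using rtranclp_symclp_sym[of free_red a b] by (simp add: free_eq_def symclp_def[abs_def])

lemma free_eq_trans: "free_eq a b \<Longrightarrow> free_eq b c \<Longrightarrow> free_eq a c"
  unfolding free_eq_def by (rule rtranclp_trans)

lemma free_red_imp_free_eq: "free_red a b \<Longrightarrow> free_eq a b"
  unfolding free_eq_def by auto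

lemma free_eq_context: "free_eq a b \<Longrightarrow> free_eq (c @ a @ d) (c @ b @ d)"
  unfolding free_eq_def
proof (induction rule: rtranclp_induct)
  case (step y z)
  then show ?case using free_red_context[of y z c d] free_red_context[of z y c d]
    by (metis (no_types, lifting) rtranclp.rtrancl_into_rtrancl)
qed simp

lemma inv_letter_inv[simp]: "inv_letter (inv_letter x) = x" by (simp add: inv_letter_def)

lemma fst_inv_letter[simp]: "fst (inv_letter x) = fst x" by (simp add: inv_letter_def)

lemma snd_inv_letter[simp]: "snd (inv_letter x) = (\<not> snd x)" by (simp add: inv_letter_def)

lemma inv_word_Nil[simp]: "inv_word [] = []" by (simp add: inv_word_def)

lemma inv_word_Cons[simp]: "inv_word (l # w) = inv_word w @ [inv_letter l]" by (simp add: inv_word_def)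

lemma inv_word_append[simp]: "inv_word (a @ b) = inv_word b @ inv_word a" by (simp add: inv_word_def)

lemma inv_word_inv[simp]: "inv_word (inv_word w) = w" by (simp add: inv_word_def rev_map comp_def)

lemma length_inv_word[simp]: "length (inv_word w) = length w" by (simp add: inv_word_def)

lemma free_eq_cancel_right: "free_eq (u @ inv_word u) []"
proof (induction u)
  case (Cons l u)
  have "free_eq ([l] @ (u @ inv_word u) @ [inv_letter l]) ([l] @ [] @ [inv_letter l])"
    by (rule free_eq_context[OF Cons])
  moreover have "free_eq ([] @ [l, inv_letter l] @ []) ([] @ [])" by (rule free_red_imp_free_eq[OF free_redI])
  ultimately show ?case by (auto intro: free_eq_trans)
qed simp

lemma free_eq_cancel_left: "free_eq (inv_word u @ u) []"
  using free_eq_cancel_right[of "inv_word u"] by simp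

lemma word_over_Nil[simp]: "word_over S []" by (simp add: word_over_def)

lemma word_over_Cons[simp]: "word_over S (l # w) \<longleftrightarrow> fst l \<in> S \<and> word_over S w" by (simp add: word_over_def)

lemma word_over_append[simp]: "word_over S (a @ b) \<longleftrightarrow> word_over S a \<and> word_over S b"
  by (auto simp: word_over_def)

lemma word_over_inv_word[simp]: "word_over S (inv_word w) \<longleftrightarrow> word_over S w"
  by (induction w) auto

lemma restrict_word_id: "word_over S w \<Longrightarrow> restrict_word S w = w"
  by (induction w) (auto simp: restrict_word_def)

lemma restrict_word_append[simp]: "restrict_word S (a @ b) = restrict_word S a @ restrict_word S b" by (simp add: restrict_word_def)

lemma restrict_word_over: "word_over S (restrict_word S w)" by (induction w) (auto simp: restrict_word_def)

lemma free_red_restrict_word: "free_red u v \<Longrightarrow> free_red (restrict_word S u) (restrict_word S v) \<or> restrict_word S u = restrict_word S v"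
proof -
  assume "free_red u v"
  then obtain p q x where u: "u = p @ [x, inv_letter x] @ q" and v: "v = p @ q" by (auto simp: free_red_def)
  show ?thesis
  proof (cases "fst x \<in> S")
    case True
    then have "restrict_word S u = restrict_word S p @ [x, inv_letter x] @ restrict_word S q" by (simp add: u restrict_word_def)
    then show ?thesis using free_redI[of "restrict_word S p" x "restrict_word S q"] by (simp add: v)
  next
    case False
    then show ?thesis by (simp add: u v restrict_word_def)
  qed
qed

lemma free_red_inv: "free_red a b \<Longrightarrow> free_red (inv_word a) (inv_word b)"
proof -
  assume "free_red a b"
  then obtain p q x where a: "a = p @ [x, inv_letter x] @ q" and b: "b = p @ q" by (auto simp: free_red_def)
  have "inv_word a = inv_word q @ [x, inv_letter x] @ inv_word p" by (simp add: a)
  then show ?thesis using free_redI[of "inv_word q" x "inv_word p"] by (simp add: b)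
qed

lemma free_eq_inv: "free_eq a b \<Longrightarrow> free_eq (inv_word a) (inv_word b)"
  unfolding free_eq_def
proof (induction rule: rtranclp_induct)
  case (step y z)
  then show ?case using free_red_inv[of y z] free_red_inv[of z y]
    by (metis (no_types, lifting) rtranclp.rtrancl_into_rtrancl)
qed simp

definition letter_val :: "('a, 'b) monoid_scheme \<Rightarrow> 'a \<times> bool \<Rightarrow> 'a" where
  "letter_val G l = (if snd l then inv\<^bsub>G\<^esub> (fst l) else fst l)"

lemma word_eval_Nil[simp]: "word_eval G [] = \<one>\<^bsub>G\<^esub>" by (simp add: word_eval_def)

lemma word_eval_Cons[simp]: "word_eval G (l # w) = letter_val G l \<otimes>\<^bsub>G\<^esub> word_eval G w"
  by (simp add: word_eval_def letter_val_def)

section \<open>Words read along edge paths of the Cayley graph\<close>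

fun trace :: "('a, 'b) monoid_scheme \<Rightarrow> 'a \<Rightarrow> 'a word \<Rightarrow> 'a list" where
  "trace G x [] = [x]"
| "trace G x (l # w) = x # trace G (x \<otimes>\<^bsub>G\<^esub> letter_val G l) w"

definition edge_letter :: "('a, 'b) monoid_scheme \<Rightarrow> 'a set \<Rightarrow> 'a \<Rightarrow> 'a \<Rightarrow> 'a word" where
  "edge_letter G S g h = (if g = h then [] else if inv\<^bsub>G\<^esub> g \<otimes>\<^bsub>G\<^esub> h \<in> S then [(inv\<^bsub>G\<^esub> g \<otimes>\<^bsub>G\<^esub> h, False)]
      else [(inv\<^bsub>G\<^esub> h \<otimes>\<^bsub>G\<^esub> g, True)])"

fun trace_word :: "('a, 'b) monoid_scheme \<Rightarrow> 'a set \<Rightarrow> 'a list \<Rightarrow> 'a word" where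
  "trace_word G S [] = []"
| "trace_word G S [a] = []"
| "trace_word G S (a # b # L) = edge_letter G S a b @ trace_word G S (b # L)"

locale cayley_setting = group G for G :: "('a, 'b) monoid_scheme" (structure) +
  fixes S :: "'a set"
  assumes S_sub: "S \<subseteq> carrier G" and S_noinv: "\<forall>s\<in>S. inv s \<notin> S"
begin

lemma S_carrier: "s \<in> S \<Longrightarrow> s \<in> carrier G" using S_sub by auto

lemma one_notin_S: "\<one> \<notin> S"
  using S_noinv inv_one by fastforce

lemma letter_val_carrier: "fst l \<in> S \<Longrightarrow> letter_val G l \<in> carrier G"
  by (auto simp: letter_val_def S_carrier)

lemma letter_val_ne_one: "fst l \<in> S \<Longrightarrow> letter_val G l \<noteq> \<one>"
  using one_notin_S S_carrier by (auto simp: letter_val_def)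

lemma letter_val_inv_letter: "fst l \<in> carrier G \<Longrightarrow> letter_val G (inv_letter l) = inv (letter_val G l)"
  by (auto simp: letter_val_def inv_letter_def)

lemma word_eval_carrier: "word_over S w \<Longrightarrow> word_eval G w \<in> carrier G"
  by (induction w) (auto simp: letter_val_carrier)

lemma word_eval_append:
  "word_over S a \<Longrightarrow> word_over S b \<Longrightarrow> word_eval G (a @ b) = word_eval G a \<otimes> word_eval G b"
  by (induction a) (auto simp: m_assoc letter_val_carrier word_eval_carrier)

lemma word_eval_inv_word: "word_over S w \<Longrightarrow> word_eval G (inv_word w) = inv (word_eval G w)"
proof (induction w)
  case (Cons l w)
  have c: "letter_val G l \<in> carrier G" "word_eval G w \<in> carrier G" "fst l \<in> carrier G"
    using Cons(2) by (auto simp: letter_val_carrier word_eval_carrier S_carrier)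
  have "word_eval G (inv_word (l # w)) = word_eval G (inv_word w) \<otimes> word_eval G [inv_letter l]"
    using Cons(2) by (simp add: word_eval_append del: word_eval_Cons)
  also have "\<dots> = inv (word_eval G w) \<otimes> inv (letter_val G l)"
    using Cons c by (simp add: letter_val_inv_letter)
  also have "\<dots> = inv (letter_val G l \<otimes> word_eval G w)" using c by (simp add: inv_mult_group)
  finally show ?case by simp
qed simp

lemma adjeq_step: "x \<in> carrier G \<Longrightarrow> fst l \<in> S \<Longrightarrow> adjeq G S x (x \<otimes> letter_val G l)"
proof -
  assume x: "x \<in> carrier G" and l: "fst l \<in> S"
  have e: "letter_val G l \<in> carrier G" "letter_val G l \<noteq> \<one>" using l letter_val_carrier letter_val_ne_one by auto
  have ne: "x \<noteq> x \<otimes> letter_val G l"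
  proof
    assume "x = x \<otimes> letter_val G l"
    then have "x \<otimes> \<one> = x \<otimes> letter_val G l" using x by simp
    then show False using e x by simp
  qed
  have s: "fst l \<in> carrier G" using l S_carrier by simp
  have adj: "inv x \<otimes> (x \<otimes> letter_val G l) \<in> S \<or> inv (x \<otimes> letter_val G l) \<otimes> x \<in> S"
  proof (cases "snd l")
    case True
    have "inv (x \<otimes> inv (fst l)) \<otimes> x = fst l"
      using x s by (simp add: inv_mult_group m_assoc)
    then show ?thesis using True l by (simp add: letter_val_def)
  next
    case False
    have "inv x \<otimes> (x \<otimes> fst l) = fst l" using x s by (simp add: m_assoc[symmetric])
    then show ?thesis using False l by (simp add: letter_val_def)
  qed
  show ?thesis using x e ne adj by (simp add: adjeq_def cayley_adj_def)
qed

lemma edge_letter_step: "x \<in> carrier G \<Longrightarrow> fst l \<in> S \<Longrightarrow> edge_letter G S x (x \<otimes> letter_val G l) = [l]"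
proof -
  assume x: "x \<in> carrier G" and l: "fst l \<in> S"
  have ne: "x \<noteq> x \<otimes> letter_val G l" using adjeq_step[OF x l] letter_val_ne_one[OF l] letter_val_carrier[OF l] x
    by (metis l_cancel_one')
  have s: "fst l \<in> carrier G" using l S_carrier by simp
  show ?thesis
  proof (cases "snd l")
    case True
    have i1: "inv x \<otimes> (x \<otimes> inv (fst l)) = inv (fst l)" using x s by (simp add: m_assoc[symmetric])
    have i2: "inv (x \<otimes> inv (fst l)) \<otimes> x = fst l" using x s by (simp add: inv_mult_group m_assoc)
    have "inv (fst l) \<notin> S" using S_noinv l by blast
    then show ?thesis using True ne i1 i2 by (simp add: edge_letter_def letter_val_def prod_eq_iff)
  next
    case False
    have i1: "inv x \<otimes> (x \<otimes> fst l) = fst l" using x s by (simp add: m_assoc[symmetric])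
    then show ?thesis using False ne l by (simp add: edge_letter_def letter_val_def prod_eq_iff)
  qed
qed

lemma edge_letter_same[simp]: "edge_letter G S a a = []" by (simp add: edge_letter_def)

lemma edge_letter_adjeq: "adjeq G S a b \<Longrightarrow> a \<noteq> b \<Longrightarrow> \<exists>l. edge_letter G S a b = [l] \<and> fst l \<in> S \<and> a \<otimes> letter_val G l = b"
proof -
  assume e: "adjeq G S a b" and ne: "a \<noteq> b"
  have ab: "a \<in> carrier G" "b \<in> carrier G" using e by (auto simp: adjeq_def)
  have adj: "inv a \<otimes> b \<in> S \<or> inv b \<otimes> a \<in> S" using e ne by (auto simp: adjeq_def cayley_adj_def)
  show ?thesis
  proof (cases "inv a \<otimes> b \<in> S")
    case True
    have "a \<otimes> (inv a \<otimes> b) = b" using ab by (simp add: m_assoc[symmetric])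
    then show ?thesis using True ne by (intro exI[of _ "(inv a \<otimes> b, False)"]) (simp add: edge_letter_def letter_val_def)
  next
    case False
    then have s: "inv b \<otimes> a \<in> S" using adj by simp
    have "a \<otimes> inv (inv b \<otimes> a) = b" using ab by (simp add: inv_mult_group m_assoc[symmetric])
    then show ?thesis using False s ne by (intro exI[of _ "(inv b \<otimes> a, True)"]) (simp add: edge_letter_def letter_val_def)
  qed
qed

lemma trace_ne[simp]: "trace G x w \<noteq> []" by (cases w) auto

lemma trace_hd[simp]: "hd (trace G x w) = x" by (cases w) auto

lemma trace_eq_Cons: "\<exists>r. trace G x w = x # r" by (cases w) auto

lemma length_trace: "length (trace G x w) = Suc (length w)" by (induction w arbitrary: x) auto

lemma trace_last: "x \<in> carrier G \<Longrightarrow> word_over S w \<Longrightarrow> last (trace G x w) = x \<otimes> word_eval G w"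
  by (induction w arbitrary: x) (auto simp: m_assoc letter_val_carrier word_eval_carrier)

lemma edge_chain_trace: "x \<in> carrier G \<Longrightarrow> word_over S w \<Longrightarrow> edge_chain G S (trace G x w)"
proof (induction w arbitrary: x)
  case (Cons l w)
  let ?y = "x \<otimes> letter_val G l"
  have y: "?y \<in> carrier G" using Cons by (simp add: letter_val_carrier)
  obtain r where r: "trace G ?y w = ?y # r" using trace_eq_Cons by blast
  have "edge_chain G S (trace G ?y w)" using Cons y by simp
  then show ?case using r adjeq_step[of x l] Cons(2,3) by simp
qed simp

lemma trace_append:
  "x \<in> carrier G \<Longrightarrow> word_over S a \<Longrightarrow> trace G x (a @ b) = butlast (trace G x a) @ trace G (x \<otimes> word_eval G a) b"
proof (induction a arbitrary: x)
  case (Cons l a)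
  let ?y = "x \<otimes> letter_val G l"
  have y: "?y \<in> carrier G" using Cons by (simp add: letter_val_carrier)
  have "trace G x ((l # a) @ b) = x # trace G ?y (a @ b)" by simp
  also have "\<dots> = x # butlast (trace G ?y a) @ trace G (?y \<otimes> word_eval G a) b" using Cons y by simp
  also have "?y \<otimes> word_eval G a = x \<otimes> word_eval G (l # a)"
    using Cons by (simp add: m_assoc letter_val_carrier word_eval_carrier)
  finally show ?case by simp
qed simp

lemma trace_word_trace: "x \<in> carrier G \<Longrightarrow> word_over S w \<Longrightarrow> trace_word G S (trace G x w) = w"
proof (induction w arbitrary: x)
  case (Cons l w)
  let ?y = "x \<otimes> letter_val G l"
  have y: "?y \<in> carrier G" using Cons by (simp add: letter_val_carrier)
  obtain r where r: "trace G ?y w = ?y # r" using trace_eq_Cons by blast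
  have "trace_word G S (trace G ?y w) = w" using Cons y by simp
  then show ?case using r edge_letter_step[of x l] Cons(2,3) by simp
qed simp

lemma trace_word_append: "xs \<noteq> [] \<Longrightarrow> ys \<noteq> [] \<Longrightarrow> trace_word G S (xs @ ys) = trace_word G S xs @ edge_letter G S (last xs) (hd ys) @ trace_word G S ys"
proof (induction xs rule: induct_list012)
  case (2 x)
  then obtain y ys' where "ys = y # ys'" by (cases ys) auto
  then show ?case by simp
qed simp_all

lemma trace_trace_word: "edge_chain G S L \<Longrightarrow> flag_equiv G S (trace G (hd L) (trace_word G S L)) L \<and> word_over S (trace_word G S L) \<and>
    last L = hd L \<otimes> word_eval G (trace_word G S L)"
proof (induction L rule: induct_list012)
  case 1 then show ?case by (simp add: edge_chain_def)
next
  case (2 x) then show ?case by simp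
next
  case (3 x y zs)
  have exy: "adjeq G S x y" and cy: "edge_chain G S (y # zs)" using 3(3) by auto
  have x: "x \<in> carrier G" and yc: "y \<in> carrier G" using exy by (auto simp: adjeq_def)
  have IH: "flag_equiv G S (trace G y (trace_word G S (y # zs))) (y # zs)" "word_over S (trace_word G S (y # zs))"
     "last (y # zs) = y \<otimes> word_eval G (trace_word G S (y # zs))" using 3(2)[OF cy] by auto
  show ?case
  proof (cases "x = y")
    case True
    have "flag_move G S ([y] @ zs) ([y, y] @ zs)" using flag_move.dup[of y G S "[]" zs] yc by simp
    then have "flag_equiv G S (y # zs) (x # y # zs)" using True by (simp add: flag_move_imp_equiv)
    then show ?thesis using IH True by (auto intro: flag_equiv_trans)
  next
    case False
    obtain l where l: "edge_letter G S x y = [l]" "fst l \<in> S" "x \<otimes> letter_val G l = y" using edge_letter_adjeq[OF exy False] by blast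
    have E: "flag_equiv G S ([x] @ trace G y (trace_word G S (y # zs)) @ []) ([x] @ (y # zs) @ [])"
      by (rule flag_equiv_context[OF IH(1)])
    have ee: "y \<otimes> word_eval G (trace_word G S (y # zs)) = x \<otimes> (letter_val G l \<otimes> word_eval G (trace_word G S (y # zs)))"
      by (subst l(3)[symmetric]) (simp add: m_assoc letter_val_carrier[OF l(2)] word_eval_carrier[OF IH(2)] x)
    moreover have "last (x # y # zs) = x \<otimes> word_eval G (trace_word G S (x # y # zs))"
      using IH(3) l ee by simp
    ultimately show ?thesis using l IH(2) E by simp
  qed
qed

lemma free_red_trace_equiv:
  assumes x: "x \<in> carrier G" and u: "word_over S u" and fr: "free_red u v"
  shows "flag_equiv G S (trace G x u) (trace G x v)"
proof -
  obtain p q l where uu: "u = p @ [l, inv_letter l] @ q" and vv: "v = p @ q" using fr by (auto simp: free_red_def)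
  have p: "word_over S p" and l: "fst l \<in> S" and q: "word_over S q" using u uu by auto
  let ?z = "x \<otimes> word_eval G p"
  have z: "?z \<in> carrier G" using x p by (simp add: word_eval_carrier)
  have e: "letter_val G l \<in> carrier G" using l by (simp add: letter_val_carrier)
  have zz: "?z \<otimes> letter_val G l \<otimes> letter_val G (inv_letter l) = ?z"
    using z e l S_carrier by (simp add: letter_val_inv_letter m_assoc)
  obtain r where r: "trace G ?z q = ?z # r" using trace_eq_Cons by blast
  have A: "trace G x u = butlast (trace G x p) @ ([?z, ?z \<otimes> letter_val G l, ?z] @ r)"
    using x p uu zz r by (simp add: trace_append)
  have B: "trace G x v = butlast (trace G x p) @ ([?z] @ r)"
    using x p vv r by (simp add: trace_append)
  have t: "flag_tri G S ?z (?z \<otimes> letter_val G l) ?z"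
    using adjeq_step[OF z l] by (auto simp: flag_tri_def intro: adjeq_sym adjeq_refl z)
  have m1: "flag_move G S ([] @ [?z, ?z] @ r) ([] @ [?z, ?z \<otimes> letter_val G l, ?z] @ r)" by (rule flag_move.ins[OF t])
  have m2: "flag_move G S ([] @ [?z] @ r) ([] @ [?z, ?z] @ r)" by (rule flag_move.dup[OF z])
  have a: "flag_equiv G S ([?z, ?z] @ r) ([?z, ?z \<otimes> letter_val G l, ?z] @ r)" using flag_move_imp_equiv[OF m1] by simp
  have b: "flag_equiv G S ([?z] @ r) ([?z, ?z] @ r)" using flag_move_imp_equiv[OF m2] by simp
  have "flag_equiv G S ([?z, ?z \<otimes> letter_val G l, ?z] @ r) ([?z] @ r)"
    by (rule flag_equiv_trans[OF flag_equiv_sym[OF a] flag_equiv_sym[OF b]])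
  then have "flag_equiv G S (butlast (trace G x p) @ ([?z, ?z \<otimes> letter_val G l, ?z] @ r) @ []) (butlast (trace G x p) @ ([?z] @ r) @ [])"
    by (rule flag_equiv_context)
  then show ?thesis using A B by simp
qed

lemma free_eq_trace_equiv:
  assumes x: "x \<in> carrier G" and w: "word_over S w" and w': "word_over S w'" and fe: "free_eq w w'"
  shows "flag_equiv G S (trace G x w) (trace G x w')"
proof -
  have "flag_equiv G S (trace G x (restrict_word S w)) (trace G x (restrict_word S w'))"
    using fe unfolding free_eq_def
  proof (induction rule: rtranclp_induct)
    case (step y z)
    have fy: "word_over S (restrict_word S y)" and fz: "word_over S (restrict_word S z)" by (rule restrict_word_over)+
    from step(2) have "flag_equiv G S (trace G x (restrict_word S y)) (trace G x (restrict_word S z))"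
    proof
      assume "free_red y z"
      then have "free_red (restrict_word S y) (restrict_word S z) \<or> restrict_word S y = restrict_word S z" by (rule free_red_restrict_word)
      then show ?thesis using free_red_trace_equiv[OF x fy] by auto
    next
      assume "free_red z y"
      then have "free_red (restrict_word S z) (restrict_word S y) \<or> restrict_word S z = restrict_word S y" by (rule free_red_restrict_word)
      then show ?thesis
      proof
        assume "free_red (restrict_word S z) (restrict_word S y)"
        from free_red_trace_equiv[OF x fz this] show ?thesis by (rule flag_equiv_sym)
      qed simp
    qed
    then show ?case using step(3) by (rule flag_equiv_trans[rotated])
  qed simp
  then show ?thesis using restrict_word_id[OF w] restrict_word_id[OF w'] by simp
qed

lemma trace_triangle_removal:
  assumes y: "y \<in> carrier G" and r: "word_over S r" "length r = 3" "word_eval G r = \<one>" and X: "word_over S X"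
  shows "flag_equiv G S (trace G y (r @ X)) (trace G y X)"
proof -
  have "\<exists>l1 l2 l3. r = [l1, l2, l3]" using r(2) by (auto simp: numeral_3_eq_3 length_Suc_conv)
  then obtain l1 l2 l3 where rr: "r = [l1, l2, l3]" by blast
  define y1 where "y1 = y \<otimes> letter_val G l1"
  define y2 where "y2 = y1 \<otimes> letter_val G l2"
  define y3 where "y3 = y2 \<otimes> letter_val G l3"
  have vr: "trace G y r = [y, y1, y2, y3]" by (simp add: rr y1_def y2_def y3_def)
  have "last (trace G y r) = y \<otimes> word_eval G r" by (rule trace_last[OF y r(1)])
  then have y3y: "y3 = y" using vr r(3) y by simp
  have ch: "edge_chain G S [y, y1, y2, y3]" using edge_chain_trace[OF y r(1)] vr by simp
  then have e1: "adjeq G S y y1" and e2: "adjeq G S y1 y2" and e3: "adjeq G S y2 y" using y3y by simp_all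
  obtain R where R: "trace G y X = y # R" using trace_eq_Cons by blast
  have "trace G y (r @ X) = butlast (trace G y r) @ trace G (y \<otimes> word_eval G r) X" by (rule trace_append[OF y r(1)])
  then have A: "trace G y (r @ X) = [y, y1, y2] @ ([y] @ R)" using vr r(3) y R by simp
  have t1: "flag_tri G S y y1 y2" using e1 e2 e3 by (simp add: flag_tri_def adjeq_sym)
  have t2: "flag_tri G S y y2 y" using e3 y by (simp add: flag_tri_def adjeq_sym adjeq_refl)
  have m1: "flag_move G S ([] @ [y, y2] @ ([y] @ R)) ([] @ [y, y1, y2] @ ([y] @ R))" by (rule flag_move.ins[OF t1])
  have m2: "flag_move G S ([] @ [y, y] @ R) ([] @ [y, y2, y] @ R)" by (rule flag_move.ins[OF t2])
  have m3: "flag_move G S ([] @ [y] @ R) ([] @ [y, y] @ R)" by (rule flag_move.dup[OF y])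
  have a1: "flag_equiv G S ([y, y1, y2] @ ([y] @ R)) ([y, y2] @ ([y] @ R))" using flag_equiv_sym[OF flag_move_imp_equiv[OF m1]] by simp
  have a2: "flag_equiv G S ([y, y2] @ ([y] @ R)) ([y, y] @ R)" using flag_equiv_sym[OF flag_move_imp_equiv[OF m2]] by simp
  have a3: "flag_equiv G S ([y, y] @ R) ([y] @ R)" using flag_equiv_sym[OF flag_move_imp_equiv[OF m3]] by simp
  have "flag_equiv G S (trace G y (r @ X)) (y # R)"
    unfolding A using flag_equiv_trans[OF flag_equiv_trans[OF a1 a2] a3] by simp
  then show ?thesis using R by simp
qed

lemma triangle_relator_props: "r \<in> triangle_relators G S \<Longrightarrow> word_over S r \<and> length r = 3 \<and> word_eval G r = \<one>"
  by (auto simp: triangle_relators_def letter_val_def m_assoc S_carrier)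

lemma trace_conjugate_removal:
  assumes x: "x \<in> carrier G" and u: "word_over S u" and r: "r \<in> triangle_relators G S"
    and C: "word_over S C"
  shows "flag_equiv G S (trace G x (u @ (if e then inv_word r else r) @ inv_word u @ C)) (trace G x C)"
proof -
  let ?r = "if e then inv_word r else r"
  have "word_over S r" "length r = 3" "word_eval G r = \<one>" using triangle_relator_props[OF r] by auto
  then have r': "word_over S ?r" "length ?r = 3" "word_eval G ?r = \<one>"
    by (auto simp: word_eval_inv_word)
  let ?y = "x \<otimes> word_eval G u"
  have y: "?y \<in> carrier G" using x u by (simp add: word_eval_carrier)
  have "flag_equiv G S (trace G ?y (?r @ inv_word u @ C)) (trace G ?y (inv_word u @ C))"
    by (rule trace_triangle_removal[OF y r']) (use u C in simp)
  then have "flag_equiv G S (butlast (trace G x u) @ trace G ?y (?r @ inv_word u @ C) @ [])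
      (butlast (trace G x u) @ trace G ?y (inv_word u @ C) @ [])"
    by (rule flag_equiv_context)
  then have "flag_equiv G S (trace G x (u @ ?r @ inv_word u @ C)) (trace G x (u @ inv_word u @ C))"
    using x u by (simp add: trace_append)
  moreover have "free_eq ([] @ (u @ inv_word u) @ C) ([] @ [] @ C)"
    by (rule free_eq_context[OF free_eq_cancel_right])
  then have "flag_equiv G S (trace G x (u @ inv_word u @ C)) (trace G x C)"
    by (intro free_eq_trace_equiv[OF x]) (use u C in auto)
  ultimately show ?thesis by (rule flag_equiv_trans)
qed

lemma normal_closure_trace_null:
  assumes x: "x \<in> carrier G" and w: "word_over S w" and nc: "in_normal_closure S (triangle_relators G S) w"
  shows "flag_equiv G S (trace G x w) [x]"
proof -
  define f :: "'a word \<times> 'a word \<times> bool \<Rightarrow> 'a word" where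
    "f = (\<lambda>(u, r, e). u @ (if e then inv_word r else r) @ inv_word u)"
  obtain L where L: "\<forall>(u, r, e) \<in> set L. word_over S u \<and> r \<in> triangle_relators G S"
    and fe: "free_eq w (concat (map f L))"
    using nc unfolding in_normal_closure_def f_def by blast
  have main: "word_over S (concat (map f L)) \<and> flag_equiv G S (trace G x (concat (map f L))) [x]"
    using L
  proof (induction L)
    case (Cons a L)
    obtain u r e where a: "a = (u, r, e)" by (cases a) auto
    have u: "word_over S u" and r: "r \<in> triangle_relators G S" using Cons(2) a by auto
    have IH: "word_over S (concat (map f L))" "flag_equiv G S (trace G x (concat (map f L))) [x]"
      using Cons by auto
    have "flag_equiv G S (trace G x (concat (map f (a # L)))) [x]"
      using flag_equiv_trans[OF trace_conjugate_removal[OF x u r IH(1)] IH(2)] by (simp add: a f_def)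
    moreover have "word_over S r" using triangle_relator_props[OF r] by simp
    then have "word_over S (concat (map f (a # L)))" using u IH(1) by (simp add: a f_def)
    ultimately show ?case by simp
  qed simp
  have "flag_equiv G S (trace G x w) (trace G x (concat (map f L)))"
    by (rule free_eq_trace_equiv[OF x w]) (use main fe in auto)
  then show ?thesis using main by (blast intro: flag_equiv_trans)
qed

lemma presentation_edge_loop_null:
  assumes pres: "is_presentation G S (triangle_relators G S)" and ch: "edge_chain G S L" and clamp01: "last L = hd L"
  shows "flag_equiv G S L [hd L]"
proof -
  have v: "hd L \<in> carrier G" using ch by (cases L) (auto simp: edge_chain_def)
  have W: "flag_equiv G S (trace G (hd L) (trace_word G S L)) L" "word_over S (trace_word G S L)"
    "last L = hd L \<otimes> word_eval G (trace_word G S L)" using trace_trace_word[OF ch] by auto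
  have "hd L \<otimes> word_eval G (trace_word G S L) = hd L \<otimes> \<one>" using W(3) clamp01 v by simp
  then have ev1: "word_eval G (trace_word G S L) = \<one>" using v W(2) word_eval_carrier l_cancel_one by simp
  have "in_normal_closure S (triangle_relators G S) (trace_word G S L)" using pres W(2) ev1 by (simp add: is_presentation_def)
  then have "flag_equiv G S (trace G (hd L) (trace_word G S L)) [hd L]" by (rule normal_closure_trace_null[OF v W(2)])
  from flag_equiv_trans[OF flag_equiv_sym[OF W(1)] this] show ?thesis .
qed

definition relator_conj :: "'a word \<Rightarrow> bool" where
  "relator_conj t \<longleftrightarrow> (\<exists>q r e. word_over S q \<and> r \<in> triangle_relators G S \<and>
      free_eq t (q @ (if e then inv_word r else r) @ inv_word q))"

lemma relator_conj_inv: "relator_conj (inv_word t) \<Longrightarrow> relator_conj t"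
proof -
  assume "relator_conj (inv_word t)"
  then obtain q r e where h: "word_over S q" "r \<in> triangle_relators G S"
    "free_eq (inv_word t) (q @ (if e then inv_word r else r) @ inv_word q)" by (auto simp: relator_conj_def)
  have "free_eq t (inv_word (q @ (if e then inv_word r else r) @ inv_word q))"
    using free_eq_inv[OF h(3)] by simp
  then have "free_eq t (q @ (if \<not> e then inv_word r else r) @ inv_word q)" by (cases e) simp_all
  then show ?thesis using h(1,2) unfolding relator_conj_def by blast
qed

lemma relator_conj_rotate: "fst l1 \<in> S \<Longrightarrow> relator_conj [l2, l3, l1] \<Longrightarrow> relator_conj [l1, l2, l3]"
proof -
  assume l1: "fst l1 \<in> S" and "relator_conj [l2, l3, l1]"
  then obtain q r e where h: "word_over S q" "r \<in> triangle_relators G S"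
    "free_eq [l2, l3, l1] (q @ (if e then inv_word r else r) @ inv_word q)" by (auto simp: relator_conj_def)
  have f1: "free_eq ([l1, l2, l3] @ [l1, inv_letter l1] @ []) ([l1, l2, l3] @ [])"
    by (rule free_red_imp_free_eq[OF free_redI])
  have e1: "[l1, l2, l3] @ [l1, inv_letter l1] @ [] = [l1] @ [l2, l3, l1] @ [inv_letter l1]" by simp
  have f1': "free_eq [l1, l2, l3] ([l1] @ [l2, l3, l1] @ [inv_letter l1])"
    using free_eq_sym[OF f1] unfolding e1 by simp
  have f2: "free_eq ([l1] @ [l2, l3, l1] @ [inv_letter l1]) ([l1] @ (q @ (if e then inv_word r else r) @ inv_word q) @ [inv_letter l1])"
    by (rule free_eq_context[OF h(3)])
  have e2: "[l1] @ (q @ (if e then inv_word r else r) @ inv_word q) @ [inv_letter l1] =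
      (l1 # q) @ (if e then inv_word r else r) @ inv_word (l1 # q)" by simp
  have "free_eq [l1, l2, l3] ((l1 # q) @ (if e then inv_word r else r) @ inv_word (l1 # q))"
    using free_eq_trans[OF f1' f2] unfolding e2 .
  moreover have "word_over S (l1 # q)" using l1 h(1) by simp
  ultimately show ?thesis using h(2) unfolding relator_conj_def by blast
qed

lemma word_eval_rotate:
  assumes "fst l1 \<in> S" "fst l2 \<in> S" "fst l3 \<in> S" "word_eval G [l1, l2, l3] = \<one>"
  shows "word_eval G [l2, l3, l1] = \<one>"
proof -
  have c: "letter_val G l1 \<in> carrier G" "letter_val G l2 \<in> carrier G" "letter_val G l3 \<in> carrier G" using assms by (auto simp: letter_val_carrier)
  have E: "letter_val G l1 \<otimes> (letter_val G l2 \<otimes> letter_val G l3) = \<one>" using assms(4) c by simp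
  have "(letter_val G l2 \<otimes> letter_val G l3) \<otimes> letter_val G l1 = \<one>" by (rule inv_comm[OF E]) (use c in auto)
  then show ?thesis using c by (simp add: m_assoc)
qed

lemma relator_conj_positive:
  assumes "a \<in> S" "b \<in> S" "c \<in> S" "word_eval G [(a, False), (b, False), (c, e)] = \<one>"
  shows "relator_conj [(a, False), (b, False), (c, e)]"
proof -
  have "[(a, False), (b, False), (c, e)] \<in> triangle_relators G S"
    using assms by (cases e) (auto simp: triangle_relators_def letter_val_def m_assoc S_carrier)
  then show ?thesis unfolding relator_conj_def
    by (intro exI[of _ "[]"] exI[of _ "[(a, False), (b, False), (c, e)]"] exI[of _ False]) simp
qed

text \<open>The relators of R are the length-3 relations with at most one inverted letter, namely the
  last one. Every length-3 relation is a cyclic rotation of such a relator or of its inverse.\<close>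

lemma triangle_word_relator_conj:
  assumes t: "word_over S t" "length t = 3" "word_eval G t = \<one>"
  shows "relator_conj t"
proof -
  have few_inverses: "relator_conj t"
    if t: "word_over S t" "length t = 3" "word_eval G t = \<one>" "length (filter snd t) \<le> 1" for t
  proof -
    obtain l1 l2 l3 where tt: "t = [l1, l2, l3]"
      using t(2) by (auto simp: numeral_3_eq_3 length_Suc_conv)
    have S: "fst l1 \<in> S" "fst l2 \<in> S" "fst l3 \<in> S" using t(1) tt by auto
    have e1: "word_eval G [l1, l2, l3] = \<one>" using t(3) tt by simp
    have e2: "word_eval G [l2, l3, l1] = \<one>" by (rule word_eval_rotate[OF S e1])
    have e3: "word_eval G [l3, l1, l2] = \<one>" by (rule word_eval_rotate[OF S(2,3,1) e2])
    have positive: "relator_conj [x, y, z]"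
      if "fst x \<in> S" "fst y \<in> S" "fst z \<in> S" "\<not> snd x" "\<not> snd y" "word_eval G [x, y, z] = \<one>"
      for x y z
      using relator_conj_positive[of "fst x" "fst y" "fst z" "snd z"] that by (cases x, cases y, cases z) simp
    consider "\<not> snd l1" "\<not> snd l2" | "snd l1" "\<not> snd l2" "\<not> snd l3" | "\<not> snd l1" "snd l2" "\<not> snd l3"
      using t(4) tt by (cases "snd l1"; cases "snd l2"; cases "snd l3") auto
    then show ?thesis
    proof cases
      case 1
      then show ?thesis using positive[OF S _ _ e1] tt by simp
    next
      case 2
      then show ?thesis using relator_conj_rotate[OF S(1) positive[OF S(2,3,1) _ _ e2]] tt by simp
    next
      case 3
      then have "relator_conj [l2, l3, l1]"
        using relator_conj_rotate[OF S(2) positive[OF S(3,1,2) _ _ e3]] by simp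
      then show ?thesis using relator_conj_rotate[OF S(1)] tt by simp
    qed
  qed
  obtain a sa b sb c sc where tt: "t = [(a, sa), (b, sb), (c, sc)]"
    using t(2) by (auto simp: numeral_3_eq_3 length_Suc_conv)
  have "length (filter snd t) \<le> 1 \<or> length (filter snd (inv_word t)) \<le> 1"
    by (cases sa; cases sb; cases sc) (simp_all add: tt inv_letter_def)
  moreover have "word_eval G (inv_word t) = \<one>" using t by (simp add: word_eval_inv_word)
  ultimately show ?thesis
    using few_inverses[OF t] few_inverses[of "inv_word t"] relator_conj_inv t by auto
qed

lemma in_normal_closure_free_eq:
  "in_normal_closure S (triangle_relators G S) w \<Longrightarrow> free_eq w w' \<Longrightarrow> in_normal_closure S (triangle_relators G S) w'"
  unfolding in_normal_closure_def by (meson free_eq_sym free_eq_trans)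

lemma in_normal_closure_Nil: "in_normal_closure S (triangle_relators G S) []"
  unfolding in_normal_closure_def by (intro exI[of _ "[]"]) simp

lemma in_normal_closure_insert_triangle:
  assumes P: "word_over S P" and Q: "word_over S Q" and t: "word_over S t" "length t = 3" "word_eval G t = \<one>"
    and nc: "in_normal_closure S (triangle_relators G S) (P @ Q)"
  shows "in_normal_closure S (triangle_relators G S) (P @ t @ Q)"
proof -
  obtain q r e where h: "word_over S q" "r \<in> triangle_relators G S"
    "free_eq t (q @ (if e then inv_word r else r) @ inv_word q)" using triangle_word_relator_conj[OF t] by (auto simp: relator_conj_def)
  let ?r = "if e then inv_word r else r"
  define f :: "'a word \<times> 'a word \<times> bool \<Rightarrow> 'a word" where
    "f = (\<lambda>(u, r, e). u @ (if e then inv_word r else r) @ inv_word u)"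
  obtain L where L: "\<forall>(u, r, e) \<in> set L. word_over S u \<and> r \<in> triangle_relators G S"
    and fe: "free_eq (P @ Q) (concat (map f L))"
    using nc unfolding in_normal_closure_def f_def by blast
  let ?C = "(P @ q) @ ?r @ inv_word (P @ q)"
  have f1: "free_eq (P @ t @ Q) (P @ (q @ ?r @ inv_word q) @ Q)" by (rule free_eq_context[OF h(3)])
  have f2: "free_eq ((P @ q @ ?r @ inv_word q) @ (inv_word P @ P) @ Q) ((P @ q @ ?r @ inv_word q) @ [] @ Q)"
    by (rule free_eq_context[OF free_eq_cancel_left])
  have f3: "free_eq (?C @ (P @ Q) @ []) (?C @ concat (map f L) @ [])" by (rule free_eq_context[OF fe])
  have e2: "(P @ q @ ?r @ inv_word q) @ (inv_word P @ P) @ Q = ?C @ (P @ Q)" by simp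
  have e2': "(P @ q @ ?r @ inv_word q) @ [] @ Q = P @ (q @ ?r @ inv_word q) @ Q" by simp
  have f2': "free_eq (?C @ (P @ Q)) (P @ (q @ ?r @ inv_word q) @ Q)" using f2 unfolding e2 e2' .
  have f3': "free_eq (?C @ (P @ Q)) (?C @ concat (map f L))" using f3 by simp
  have X0: "free_eq (P @ t @ Q) (?C @ concat (map f L))"
    by (rule free_eq_trans[OF f1 free_eq_trans[OF free_eq_sym[OF f2'] f3']])
  have e3: "?C @ concat (map f L) = concat (map f ((P @ q, r, e) # L))" by (simp add: f_def)
  have X: "free_eq (P @ t @ Q) (concat (map f ((P @ q, r, e) # L)))" using X0 unfolding e3 .
  have Lc: "\<forall>(u, r, e) \<in> set ((P @ q, r, e) # L). word_over S u \<and> r \<in> triangle_relators G S"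
    using L P h(1,2) by auto
  show ?thesis unfolding in_normal_closure_def using X Lc unfolding f_def by blast
qed

text \<open>Equality modulo the normal closure of R, phrased through contexts, so that it is a
  congruence for concatenation without forming the quotient group.\<close>

definition nc_congruent :: "'a word \<Rightarrow> 'a word \<Rightarrow> bool" where
  "nc_congruent w1 w2 \<longleftrightarrow> (\<forall>u v. word_over S u \<longrightarrow> word_over S v \<longrightarrow>
      (in_normal_closure S (triangle_relators G S) (u @ w1 @ v) \<longleftrightarrow> in_normal_closure S (triangle_relators G S) (u @ w2 @ v)))"

lemma nc_congruent_refl[simp]: "nc_congruent w w" by (simp add: nc_congruent_def)

lemma nc_congruent_sym: "nc_congruent a b \<Longrightarrow> nc_congruent b a" by (simp add: nc_congruent_def)

lemma nc_congruent_trans: "nc_congruent a b \<Longrightarrow> nc_congruent b c \<Longrightarrow> nc_congruent a c" by (simp add: nc_congruent_def)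

lemma nc_congruent_context: "word_over S p \<Longrightarrow> word_over S q \<Longrightarrow> nc_congruent a b \<Longrightarrow> nc_congruent (p @ a @ q) (p @ b @ q)"
  unfolding nc_congruent_def
proof (intro allI impI)
  fix u v assume p: "word_over S p" and q: "word_over S q"
    and h: "\<forall>u v. word_over S u \<longrightarrow> word_over S v \<longrightarrow>
      in_normal_closure S (triangle_relators G S) (u @ a @ v) = in_normal_closure S (triangle_relators G S) (u @ b @ v)"
    and u: "word_over S u" and v: "word_over S v"
  have up: "word_over S (u @ p)" and qv: "word_over S (q @ v)" using p q u v by simp_all
  have "in_normal_closure S (triangle_relators G S) ((u @ p) @ a @ (q @ v)) = in_normal_closure S (triangle_relators G S) ((u @ p) @ b @ (q @ v))"
    using h[rule_format, OF up qv] .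
  then show "in_normal_closure S (triangle_relators G S) (u @ (p @ a @ q) @ v) = in_normal_closure S (triangle_relators G S) (u @ (p @ b @ q) @ v)"
    by simp
qed

lemma free_eq_nc_congruent: "free_eq a b \<Longrightarrow> nc_congruent a b"
  unfolding nc_congruent_def using free_eq_context free_eq_sym in_normal_closure_free_eq by blast

text \<open>If z = x y in G, then x y z^-1 and z y^-1 x^-1 are relations of length 3, and inserting
  either one shows that replacing z by x y, or back, preserves membership in the normal closure.\<close>

lemma nc_congruent_letter_product:
  assumes S: "fst x \<in> S" "fst y \<in> S" "fst z \<in> S"
    and zxy: "letter_val G z = letter_val G x \<otimes> letter_val G y"
  shows "nc_congruent [z] [x, y]"
  unfolding nc_congruent_def
proof (intro allI impI iffI)
  let ?t1 = "[x, y, inv_letter z]" and ?t2 = "[z, inv_letter y, inv_letter x]"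
  have c: "letter_val G x \<in> carrier G" "letter_val G y \<in> carrier G" "letter_val G z \<in> carrier G"
    using S by (simp_all add: letter_val_carrier)
  have t1: "word_over S ?t1" "length ?t1 = 3" "word_eval G ?t1 = \<one>"
    using S c S_carrier by (simp_all add: letter_val_inv_letter zxy m_assoc[symmetric])
  have "letter_val G x \<otimes> letter_val G y \<otimes> inv (letter_val G y) = letter_val G x"
    using c by (simp add: m_assoc)
  then have t2: "word_over S ?t2" "length ?t2 = 3" "word_eval G ?t2 = \<one>"
    using S c S_carrier by (simp_all add: letter_val_inv_letter zxy m_assoc[symmetric])
  fix u v assume u: "word_over S u" and v: "word_over S v"
  {
    assume h: "in_normal_closure S (triangle_relators G S) (u @ [z] @ v)"
    have "in_normal_closure S (triangle_relators G S) (u @ ?t1 @ ([z] @ v))"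
      by (rule in_normal_closure_insert_triangle[OF u _ t1 h]) (use v S in simp)
    moreover have "free_eq ((u @ [x, y]) @ [inv_letter z, inv_letter (inv_letter z)] @ v) ((u @ [x, y]) @ v)"
      by (rule free_red_imp_free_eq[OF free_redI])
    ultimately show "in_normal_closure S (triangle_relators G S) (u @ [x, y] @ v)"
      by (simp add: in_normal_closure_free_eq)
  next
    assume h: "in_normal_closure S (triangle_relators G S) (u @ [x, y] @ v)"
    have "in_normal_closure S (triangle_relators G S) (u @ ?t2 @ ([x, y] @ v))"
      by (rule in_normal_closure_insert_triangle[OF u _ t2 h]) (use v S in simp)
    moreover have "free_eq ((u @ [z, inv_letter y]) @ [inv_letter x, inv_letter (inv_letter x)] @ (y # v))
        ((u @ [z, inv_letter y]) @ (y # v))"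
      "free_eq ((u @ [z]) @ [inv_letter y, inv_letter (inv_letter y)] @ v) ((u @ [z]) @ v)"
      by (rule free_red_imp_free_eq[OF free_redI])+
    ultimately show "in_normal_closure S (triangle_relators G S) (u @ [z] @ v)"
      by (simp add: in_normal_closure_free_eq free_eq_trans)
  }
qed

lemma edge_letter_flag_tri:
  assumes t: "flag_tri G S a b c"
  shows "nc_congruent (edge_letter G S a c) (edge_letter G S a b @ edge_letter G S b c)"
proof (cases "a = b \<or> b = c")
  case True
  then show ?thesis by auto
next
  case False
  have eab: "adjeq G S a b" and ebc: "adjeq G S b c" and eac: "adjeq G S a c"
    using t by (auto simp: flag_tri_def)
  have ac: "a \<in> carrier G" "b \<in> carrier G" using eab by (auto simp: adjeq_def)
  obtain x where x: "edge_letter G S a b = [x]" "fst x \<in> S" "a \<otimes> letter_val G x = b"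
    using edge_letter_adjeq[OF eab] False by blast
  obtain y where y: "edge_letter G S b c = [y]" "fst y \<in> S" "b \<otimes> letter_val G y = c"
    using edge_letter_adjeq[OF ebc] False by blast
  have ex: "letter_val G x \<in> carrier G" and ey: "letter_val G y \<in> carrier G"
    using x y by (auto simp: letter_val_carrier)
  show ?thesis
  proof (cases "a = c")
    case True
    have "b \<otimes> letter_val G (inv_letter x) = a"
      using x ac ex S_carrier by (auto simp: letter_val_inv_letter m_assoc)
    then have "edge_letter G S b c = [inv_letter x]" using edge_letter_step[of b "inv_letter x"] ac x True by simp
    then have "free_eq (edge_letter G S a b @ edge_letter G S b c) (edge_letter G S a c)"
      using x True free_red_imp_free_eq[OF free_redI[of "[]" x "[]"]] by simp
    then show ?thesis by (rule nc_congruent_sym[OF free_eq_nc_congruent])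
  next
    case False
    obtain z where z: "edge_letter G S a c = [z]" "fst z \<in> S" "a \<otimes> letter_val G z = c"
      using edge_letter_adjeq[OF eac False] by blast
    have "a \<otimes> letter_val G z = a \<otimes> (letter_val G x \<otimes> letter_val G y)"
      using x y z ac ex ey by (simp add: m_assoc[symmetric])
    then have "letter_val G z = letter_val G x \<otimes> letter_val G y"
      using ac ex ey z letter_val_carrier by simp
    then show ?thesis using nc_congruent_letter_product x y z by simp
  qed
qed

lemma trace_word_split3: "M \<noteq> [] \<Longrightarrow> trace_word G S (pre @ M @ post) =
   (if pre = [] then [] else trace_word G S pre @ edge_letter G S (last pre) (hd M)) @ trace_word G S M @
   (if post = [] then [] else edge_letter G S (last M) (hd post) @ trace_word G S post)"
proof -
  assume M: "M \<noteq> []"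
  have A: "trace_word G S (M @ post) = trace_word G S M @ (if post = [] then [] else edge_letter G S (last M) (hd post) @ trace_word G S post)"
    using trace_word_append[OF M, of post] by (cases "post = []") auto
  show ?thesis
  proof (cases "pre = []")
    case True then show ?thesis using A by simp
  next
    case False
    then show ?thesis using trace_word_append[OF False, of "M @ post"] A M by simp
  qed
qed

lemma flag_move_nc_congruent: "flag_move G S L L' \<Longrightarrow> edge_chain G S L \<Longrightarrow> nc_congruent (trace_word G S L) (trace_word G S L')"
proof (induction rule: flag_move.induct)
  case (ins a b c pre post)
  let ?A = "if pre = [] then [] else trace_word G S pre @ edge_letter G S (last pre) a"
  let ?B = "if post = [] then [] else edge_letter G S c (hd post) @ trace_word G S post"
  have w1: "trace_word G S (pre @ [a, c] @ post) = ?A @ edge_letter G S a c @ ?B" using trace_word_split3[of "[a, c]" pre post] by simp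
  have w2: "trace_word G S (pre @ [a, b, c] @ post) = ?A @ (edge_letter G S a b @ edge_letter G S b c) @ ?B"
    using trace_word_split3[of "[a, b, c]" pre post] by simp
  have "word_over S (trace_word G S (pre @ [a, c] @ post))" using trace_trace_word[OF ins(2)] by simp
  then have AB: "word_over S ?A" "word_over S ?B" unfolding w1 by simp_all
  show ?case unfolding w1 w2 by (rule nc_congruent_context[OF AB edge_letter_flag_tri[OF ins(1)]])
next
  case (dup a pre post)
  have w1: "trace_word G S (pre @ [a] @ post) = trace_word G S (pre @ [a, a] @ post)"
    using trace_word_split3[of "[a]" pre post] trace_word_split3[of "[a, a]" pre post] by simp
  then show ?case by simp
qed

lemma flag_equiv_nc_congruent: "flag_equiv G S L L' \<Longrightarrow> edge_chain G S L \<Longrightarrow> nc_congruent (trace_word G S L) (trace_word G S L')"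
  unfolding flag_equiv_def
proof (induction rule: rtranclp_induct)
  case (step y z)
  have cy: "edge_chain G S y" using flag_equiv_edge_chain[of G S L y] step unfolding flag_equiv_def by blast
  from step(2) have "nc_congruent (trace_word G S y) (trace_word G S z)"
  proof
    assume "flag_move G S y z" then show ?thesis using flag_move_nc_congruent cy by blast
  next
    assume m: "flag_move G S z y"
    then have "edge_chain G S z" using flag_move_edge_chain cy by blast
    then show ?thesis using flag_move_nc_congruent[OF m] nc_congruent_sym by blast
  qed
  then show ?case using step by (blast intro: nc_congruent_trans)
qed simp

lemma null_trace_in_normal_closure:
  assumes w: "word_over S w" and e: "flag_equiv G S (trace G \<one> w) [\<one>]"
  shows "in_normal_closure S (triangle_relators G S) w"
proof -
  have "nc_congruent (trace_word G S (trace G \<one> w)) (trace_word G S [\<one>])" by (rule flag_equiv_nc_congruent[OF e edge_chain_trace[OF one_closed w]])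
  then have "nc_congruent w []" using trace_word_trace[OF one_closed w] by simp
  then have "in_normal_closure S (triangle_relators G S) ([] @ w @ []) = in_normal_closure S (triangle_relators G S) ([] @ [] @ [])"
    unfolding nc_congruent_def using word_over_Nil by blast
  then show ?thesis using in_normal_closure_Nil by simp
qed

lemma generate_word: "g \<in> generate G S \<Longrightarrow> \<exists>w. word_over S w \<and> word_eval G w = g"
proof (induction rule: generate.induct)
  case one then show ?case by (intro exI[of _ "[]"]) simp
next
  case (incl h) then show ?case by (intro exI[of _ "[(h, False)]"]) (simp add: letter_val_def S_carrier)
next
  case (inv h) then show ?case by (intro exI[of _ "[(h, True)]"]) (simp add: letter_val_def S_carrier)
next
  case (eng h1 h2)
  then obtain w1 w2 where "word_over S w1" "word_eval G w1 = h1" "word_over S w2" "word_eval G w2 = h2" by blast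
  then show ?case by (intro exI[of _ "w1 @ w2"]) (simp add: word_eval_append)
qed

lemma free_red_word_eval: "word_over S u \<Longrightarrow> free_red u v \<Longrightarrow> word_eval G u = word_eval G v"
proof -
  assume u: "word_over S u" and "free_red u v"
  then obtain p q l where uu: "u = p @ [l, inv_letter l] @ q" and vv: "v = p @ q" by (auto simp: free_red_def)
  have p: "word_over S p" and l: "fst l \<in> S" and q: "word_over S q" using u uu by auto
  have c: "letter_val G l \<in> carrier G" "word_eval G q \<in> carrier G" using l q by (auto simp: letter_val_carrier word_eval_carrier)
  have "word_eval G ([l, inv_letter l] @ q) = word_eval G q"
    using c l S_carrier by (simp add: letter_val_inv_letter m_assoc[symmetric])
  then show ?thesis using p q l uu vv by (simp add: word_eval_append)
qed

lemma free_eq_word_eval: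
  assumes w: "word_over S w" and w': "word_over S w'" and fe: "free_eq w w'"
  shows "word_eval G w = word_eval G w'"
proof -
  have "word_eval G (restrict_word S w) = word_eval G (restrict_word S w')"
    using fe unfolding free_eq_def
  proof (induction rule: rtranclp_induct)
    case (step y z)
    have fy: "word_over S (restrict_word S y)" and fz: "word_over S (restrict_word S z)" by (rule restrict_word_over)+
    from step(2) have "word_eval G (restrict_word S y) = word_eval G (restrict_word S z)"
    proof
      assume "free_red y z"
      then have "free_red (restrict_word S y) (restrict_word S z) \<or> restrict_word S y = restrict_word S z" by (rule free_red_restrict_word)
      then show ?thesis using free_red_word_eval[OF fy] by auto
    next
      assume "free_red z y"
      then have "free_red (restrict_word S z) (restrict_word S y) \<or> restrict_word S z = restrict_word S y" by (rule free_red_restrict_word)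
      then show ?thesis using free_red_word_eval[OF fz] by auto
    qed
    then show ?case using step(3) by simp
  qed simp
  then show ?thesis using restrict_word_id[OF w] restrict_word_id[OF w'] by simp
qed

lemma normal_closure_word_eval:
  assumes w: "word_over S w" and nc: "in_normal_closure S (triangle_relators G S) w"
  shows "word_eval G w = \<one>"
proof -
  define f :: "'a word \<times> 'a word \<times> bool \<Rightarrow> 'a word" where
    "f = (\<lambda>(u, r, e). u @ (if e then inv_word r else r) @ inv_word u)"
  obtain L where L: "\<forall>(u, r, e) \<in> set L. word_over S u \<and> r \<in> triangle_relators G S"
    and fe: "free_eq w (concat (map f L))"
    using nc unfolding in_normal_closure_def f_def by blast
  have main: "word_over S (concat (map f L)) \<and> word_eval G (concat (map f L)) = \<one>" using L
  proof (induction L)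
    case (Cons a L)
    obtain u r e where a: "a = (u, r, e)" by (cases a) auto
    have u: "word_over S u" and rR: "r \<in> triangle_relators G S" using Cons(2) a by auto
    have IH: "word_over S (concat (map f L))" "word_eval G (concat (map f L)) = \<one>" using Cons by auto
    let ?r = "if e then inv_word r else r"
    have rp: "word_over S r" "word_eval G r = \<one>" using triangle_relator_props[OF rR] by auto
    have r': "word_over S ?r" "word_eval G ?r = \<one>" using rp by (auto simp: word_eval_inv_word)
    have cu: "word_eval G u \<in> carrier G" using u by (simp add: word_eval_carrier)
    have iu: "word_eval G (inv_word u) = inv (word_eval G u)" by (rule word_eval_inv_word[OF u])
    have "word_eval G (u @ ?r @ inv_word u) = word_eval G u \<otimes> (word_eval G ?r \<otimes> word_eval G (inv_word u))"
      using u r'(1) by (simp add: word_eval_append)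
    also have "\<dots> = \<one>" using r'(2) iu cu by simp
    finally have p1: "word_eval G (u @ ?r @ inv_word u) = \<one>" .
    have cc: "concat (map f (a # L)) = (u @ ?r @ inv_word u) @ concat (map f L)" by (simp add: a f_def)
    have ov: "word_over S (u @ ?r @ inv_word u)" using u r'(1) by simp
    show ?case unfolding cc using IH ov p1 word_eval_append[OF ov IH(1)] by simp
  qed simp
  show ?thesis using free_eq_word_eval[OF w _ fe] main by simp
qed

end

section \<open>Simplicial approximation\<close>

lemma realization_support_flag_tri:
  "f \<in> flag_realization G S \<Longrightarrow> a \<in> support f \<Longrightarrow> b \<in> support f \<Longrightarrow> c \<in> support f
   \<Longrightarrow> flag_tri G S a b c"
  by (auto simp: flag_tri_def intro: realization_support_adjeq)

lemma support_open_in: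
  fixes H :: "'x::topological_space \<Rightarrow> 'a \<Rightarrow> real"
  assumes "continuous_on K H"
  obtains U where "open U" "U \<inter> K = {x \<in> K. v \<in> support (H x)}"
proof -
  have "continuous_on K (\<lambda>x. H x v)"
    using assms by (rule continuous_on_product_then_coordinatewise)
  then obtain U where "open U" "U \<inter> K = (\<lambda>x. H x v) -` (- {0}) \<inter> K"
    unfolding continuous_on_open_invariant by (meson open_Compl closed_singleton)
  then show ?thesis by (intro that[of U]) (auto simp: support_def)
qed

lemma support_near:
  fixes H :: "'x::metric_space \<Rightarrow> 'a \<Rightarrow> real"
  assumes "continuous_on K H" "x \<in> K" "v \<in> support (H x)"
  obtains d where "0 < d" "\<And>y. y \<in> K \<Longrightarrow> dist y x < d \<Longrightarrow> v \<in> support (H y)"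
proof -
  obtain U where U: "open U" "U \<inter> K = {x \<in> K. v \<in> support (H x)}"
    using support_open_in[OF assms(1)] .
  then obtain d where "0 < d" "ball x d \<subseteq> U"
    using assms(2,3) open_contains_ball by blast
  show ?thesis
  proof (rule that[OF \<open>0 < d\<close>])
    fix y assume "y \<in> K" "dist y x < d"
    then have "y \<in> U \<inter> K" using \<open>ball x d \<subseteq> U\<close> by (auto simp: dist_commute)
    then show "v \<in> support (H y)" using U(2) by blast
  qed
qed

text \<open>A Lebesgue number for the cover of K by the open stars of the vertices.\<close>

lemma realization_Lebesgue_number:
  fixes H :: "'x::metric_space \<Rightarrow> 'a \<Rightarrow> real"
  assumes "compact K" "continuous_on K H" "\<And>x. x \<in> K \<Longrightarrow> H x \<in> flag_realization G S"
  shows "\<exists>e w. 0 < e \<and> (\<forall>x\<in>K. \<forall>y\<in>K. dist y x < e \<longrightarrow> w x \<in> support (H y))"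
proof -
  have "\<exists>U. open U \<and> U \<inter> K = {x \<in> K. v \<in> support (H x)}" for v
    by (rule support_open_in[OF assms(2), where v = v]) blast
  then obtain U where U: "\<forall>v. open (U v) \<and> U v \<inter> K = {x \<in> K. v \<in> support (H x)}"
    by (rule choice[OF allI, THEN exE])
  then have U_open: "open (U v)" and U_K: "U v \<inter> K = {x \<in> K. v \<in> support (H x)}" for v
    by simp_all
  have "K \<subseteq> \<Union> (range U)"
  proof
    fix x assume x: "x \<in> K"
    obtain v where "v \<in> support (H x)"
      using realization_support_nonempty[OF assms(3)[OF x]] by blast
    then have "x \<in> U v" using U_K[of v] x by blast
    then show "x \<in> \<Union> (range U)" by blast
  qed
  moreover have "open A" if "A \<in> range U" for A using that U_open by blast
  ultimately obtain e where e: "0 < e" "\<And>x. x \<in> K \<Longrightarrow> \<exists>A \<in> range U. ball x e \<subseteq> A"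
    by (rule Heine_Borel_lemma[OF assms(1)]) auto
  have "\<exists>v. \<forall>y\<in>K. dist y x < e \<longrightarrow> v \<in> support (H y)" if x: "x \<in> K" for x
  proof -
    obtain v where v: "ball x e \<subseteq> U v" using e(2)[OF x] by blast
    have "v \<in> support (H y)" if "y \<in> K" "dist y x < e" for y
    proof -
      have "y \<in> U v \<inter> K" using v that by (auto simp: dist_commute)
      then show ?thesis unfolding U_K by blast
    qed
    then show ?thesis by blast
  qed
  then obtain w where "\<forall>x\<in>K. \<forall>y\<in>K. dist y x < e \<longrightarrow> w x \<in> support (H y)"
    by (rule bchoice[OF ballI, THEN exE])
  then show ?thesis using e(1) by blast
qed

lemma dist_grid_point:
  assumes "0 < N" "\<bar>x * N - real k\<bar> \<le> 1"
  shows "dist x (real k / N) \<le> 1 / N"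
proof -
  have "x - real k / N = (x * N - real k) / N" using assms(1) by (simp add: field_simps)
  then have "dist x (real k / N) = \<bar>x * N - real k\<bar> / N"
    using assms(1) by (simp add: dist_real_def abs_divide)
  also have "\<dots> \<le> 1 / N" using assms by (simp add: divide_right_mono)
  finally show ?thesis .
qed

text \<open>At each time, p t and edge_path L t lie in a common simplex, so the straight-line
  homotopy stays in the realization.\<close>

lemma edge_loop_approximation:
  assumes p: "path p" "path_image p \<subseteq> flag_realization G S"
    and L: "length L = Suc N" "0 < N" "last L = hd L"
    and carrier: "\<And>j t. j < N \<Longrightarrow> t \<in> {0..1} \<Longrightarrow> real j \<le> t * N \<Longrightarrow> t * N \<le> real j + 1
      \<Longrightarrow> L ! j \<in> support (p t) \<and> L ! Suc j \<in> support (p t)"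
    and closed: "pathfinish p = pathstart p"
  shows "edge_chain G S L" "homotopic_loops (flag_realization G S) p (edge_path L)"
proof -
  have pX: "t \<in> {0..1} \<Longrightarrow> p t \<in> flag_realization G S" for t
    using p(2) by (auto simp: path_image_def)
  have mid: "(real j + 1/2) / N \<in> {0..1}" "real j \<le> (real j + 1/2) / N * N"
    "(real j + 1/2) / N * N \<le> real j + 1" if "j < N" for j
    using that L(2) by (auto simp: divide_le_eq)
  have adj: "adjeq G S (L!j) (L!Suc j)" if "j < N" for j
    using carrier[OF that mid[OF that]] realization_support_adjeq[OF pX[OF mid(1)[OF that]]] by blast
  show ch: "edge_chain G S L" by (rule edge_chainI[OF L(1,2) adj])
  show "homotopic_loops (flag_realization G S) p (edge_path L)"
  proof (rule homotopic_loops_straight[OF p(1) path_edge_path p(2) path_image_edge_path[OF ch] closed])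
    show "pathfinish (edge_path L) = pathstart (edge_path L)"
      using ch L by (simp add: pathstart_edge_path pathfinish_edge_path edge_chain_def)
    fix t :: real assume t: "t \<in> {0..1}"
    have "0 \<le> t * N" "t * N \<le> real N" using t by (auto simp: mult_left_le_one_le)
    then obtain j where j: "j < N" "real j \<le> t * N" "t * N \<le> real j + 1"
      using real_in_unit_block L(2) by blast
    then obtain s where "edge_path L t = edge_pt (L!j) (L!Suc j) s"
      using edge_path_on_edge[of j L t] L(1) by auto
    then have "support (edge_path L t) \<subseteq> {L!j, L!Suc j}" using support_edge_pt by metis
    then have "support (edge_path L t) \<subseteq> support (p t)"
      using carrier[OF j(1) t j(2,3)] by blast
    then show "flag_simplex G S (support (p t) \<union> support (edge_path L t))"
      using realization_support[OF pX[OF t]] by (simp add: Un_absorb2)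
  qed
qed

lemma interval_labels_support:
  fixes p :: "real \<Rightarrow> 'a \<Rightarrow> real"
  assumes N: "0 < N" "inverse (real N) < min e d"
    and w: "\<And>x y. x \<in> {0..1} \<Longrightarrow> y \<in> {0..1} \<Longrightarrow> dist y x < e \<Longrightarrow> w x \<in> support (p y)"
    and d: "\<And>y. y \<in> {0..1} \<Longrightarrow> dist y 1 < d \<Longrightarrow> w 0 \<in> support (p y)"
    and j: "j < N" and t: "t \<in> {0..1}" and tj: "real j \<le> t * N" "t * N \<le> real j + 1"
  shows "w (real j / N) \<in> support (p t) \<and> w (real (Suc j mod N) / N) \<in> support (p t)"
proof -
  have near: "w (real k / N) \<in> support (p t)" if "k < N" "\<bar>t * N - real k\<bar> \<le> 1" for k
  proof -
    have "dist t (real k / N) \<le> 1 / N" using dist_grid_point[of N t k] that N(1) by simp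
    also have "\<dots> < e" using N(2) by (simp add: inverse_eq_divide)
    finally have "dist t (real k / N) < e" .
    moreover have "real k / N \<in> {0..1}" using that N(1) by (simp add: divide_le_eq_1)
    ultimately show ?thesis using w t by simp
  qed
  have "w (real (Suc j mod N) / N) \<in> support (p t)"
  proof (cases "Suc j < N")
    case True
    then show ?thesis using near[OF True] tj by simp
  next
    case False
    then have NSj: "N = Suc j" using j by simp
    then have "(1 - t) * N \<le> 1" using tj by (simp add: algebra_simps)
    then have "dist t 1 \<le> 1 / N" using t N(1) by (simp add: dist_real_def le_divide_eq mult.commute)
    then show ?thesis using d[OF t] N(2) NSj by (simp add: inverse_eq_divide)
  qed
  then show ?thesis using near[OF j] tj by simp
qed

lemma loop_homotopic_edge_loop:
  assumes p: "path p" "path_image p \<subseteq> flag_realization G S" "pathfinish p = pathstart p"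
  obtains L where "edge_chain G S L" "last L = hd L"
    "homotopic_loops (flag_realization G S) p (edge_path L)"
proof -
  have cp: "continuous_on {0..1} p" using p(1) by (simp add: path_def)
  have pX: "t \<in> {0..1} \<Longrightarrow> p t \<in> flag_realization G S" for t
    using p(2) by (auto simp: path_image_def)
  obtain e w where e: "0 < e"
    and w: "\<And>x y. x \<in> {0..1} \<Longrightarrow> y \<in> {0..1} \<Longrightarrow> dist y x < e \<Longrightarrow> w x \<in> support (p y)"
    using realization_Lebesgue_number[OF compact_Icc cp pX] by blast
  have "w 0 \<in> support (p 1)"
    using w[of 0 0] e(1) p(3) by (simp add: pathstart_def pathfinish_def)
  then obtain d where d: "0 < d" "\<And>y. y \<in> {0..1} \<Longrightarrow> dist y 1 < d \<Longrightarrow> w 0 \<in> support (p y)"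
    using support_near[OF cp, of 1] by auto
  obtain N :: nat where N: "0 < N" "inverse (real N) < min e d"
    using ex_inverse_of_nat_less[of "min e d"] e(1) d(1) by auto
  define L where "L = map (\<lambda>k. w (real (k mod N) / N)) [0..<Suc N]"
  have Lnth: "L ! k = w (real (k mod N) / N)" if "k \<le> N" for k
    using that by (simp add: L_def nth_map del: upt_Suc)
  have lL: "length L = Suc N" by (simp add: L_def del: upt_Suc)
  then have "L \<noteq> []" by auto
  then have closedL: "last L = hd L" using Lnth[of N] Lnth[of 0] lL by (simp add: last_conv_nth hd_conv_nth)
  have carrierL: "L ! j \<in> support (p t) \<and> L ! Suc j \<in> support (p t)"
    if "j < N" "(t::real) \<in> {0..1}" "real j \<le> t * N" "t * N \<le> real j + 1" for j t
    using interval_labels_support[where w = w and p = p, OF N w d(2) that] Lnth[of j] Lnth[of "Suc j"] that(1) by simp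
  show ?thesis
    using that edge_loop_approximation[OF p(1,2) lL N(1) closedL carrierL p(3)] closedL by blast
qed

section \<open>Null-homotopic edge loops\<close>

lemma nth_map_upt_Suc: "j \<le> N \<Longrightarrow> map g [0..<Suc N] ! j = g j"
  by (simp add: nth_map del: upt_Suc)

lemma map_upt_Suc_split: "1 \<le> N \<Longrightarrow> map g [0..<Suc N] = [g 0] @ map g [1..<N] @ [g N]"
proof -
  assume N: "1 \<le> N"
  have "[0..<Suc N] = 0 # [1..<Suc N]" by (simp add: upt_conv_Cons del: upt_Suc)
  moreover have "[1..<Suc N] = [1..<N] @ [N]" using N by simp
  ultimately show ?thesis by simp
qed

text \<open>A homotopy H of loops on a fine N \<times> N grid of the unit square, with label i j a vertex in
  the support of H on the closed cell [i/N, (i+1)/N] \<times> [j/N, (j+1)/N]. Row i lists the labels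
  of the i-th strip; its consecutive entries lie in a common cell, so it is an edge loop.\<close>

locale grid_labelling =
  fixes G :: "('a, 'b) monoid_scheme" and S :: "'a set"
    and H :: "real \<times> real \<Rightarrow> 'a \<Rightarrow> real" and N :: nat and label :: "nat \<Rightarrow> nat \<Rightarrow> 'a"
  assumes N_ge2: "2 \<le> N"
    and H_in: "\<And>s t. s \<in> {0..1} \<Longrightarrow> t \<in> {0..1} \<Longrightarrow> H (s, t) \<in> flag_realization G S"
    and H_closed: "\<And>s. s \<in> {0..1} \<Longrightarrow> H (s, 1) = H (s, 0)"
    and label_support: "\<And>i j (s::real) (t::real). i < N \<Longrightarrow> j < N \<Longrightarrow> s \<in> {0..1} \<Longrightarrow> t \<in> {0..1} \<Longrightarrow>
      real i \<le> s * N \<Longrightarrow> s * N \<le> real i + 1 \<Longrightarrow> real j \<le> t * N \<Longrightarrow> t * N \<le> real j + 1 \<Longrightarrow>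
      label i j \<in> support (H (s, t))"

begin

definition row :: "nat \<Rightarrow> 'a list" where
  "row i = map (\<lambda>j. label i (j mod N)) [0..<Suc N]"

definition mixed_row :: "nat \<Rightarrow> nat \<Rightarrow> 'a list" where
  "mixed_row i k = map (\<lambda>j. label (if j mod N < k then Suc i else i) (j mod N)) [0..<Suc N]"

lemma grid_point_in: "k \<le> N \<Longrightarrow> real k / N \<in> {0..1}"
  using N_ge2 by (simp add: divide_le_eq_1)

lemma label_at_corner:
  assumes "i < N" "j < N" "k \<in> {i, Suc i}" "l \<in> {j, Suc j}" "k \<le> N" "l \<le> N"
  shows "label i j \<in> support (H (real k / N, real l / N))"
proof -
  have N: "real N \<noteq> 0" using N_ge2 by simp
  show ?thesis
    by (rule label_support[OF assms(1,2) grid_point_in[OF assms(5)] grid_point_in[OF assms(6)]])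
       (use assms(3,4) N in auto)
qed

lemma support_H_closed: "s \<in> {0..1} \<Longrightarrow> support (H (s, real N / N)) = support (H (s, 0))"
  using H_closed N_ge2 by simp

lemma H_flag_tri:
  assumes "a \<in> support (H (s, t))" "b \<in> support (H (s, t))" "c \<in> support (H (s, t))"
    and "s \<in> {0..1}" "t \<in> {0..1}"
  shows "flag_tri G S a b c"
  using realization_support_flag_tri[OF H_in[OF assms(4,5)] assms(1-3)] .

lemma length_row: "length (row i) = Suc N" and length_mixed_row: "length (mixed_row i k) = Suc N"
  by (simp_all add: row_def mixed_row_def del: upt_Suc)

lemma nth_mixed_row:
  "j \<le> N \<Longrightarrow> mixed_row i k ! j = label (if j mod N < k then Suc i else i) (j mod N)"
  unfolding mixed_row_def by (rule nth_map_upt_Suc)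

lemma hd_row: "hd (row i) = label i 0"
  by (simp add: row_def upt_conv_Cons del: upt_Suc)

lemma mixed_row_N: "mixed_row i N = row (Suc i)"
  using N_ge2 by (auto simp: mixed_row_def row_def intro: map_cong)

text \<open>Moving one label of row i up to row i + 1 is a replacement of a vertex inside two
  triangles, the ones spanned at the grid points (i+1, k) and (i+1, k+1).\<close>

lemma mixed_row_step:
  assumes i: "Suc i < N" and k: "1 \<le> k" "k < N"
  shows "flag_equiv G S (mixed_row i k) (mixed_row i (Suc k))"
proof -
  let ?M = "mixed_row i k" and ?b = "label (Suc i) k" and ?s = "real (Suc i) / N"
  have s: "?s \<in> {0..1}" using i by (intro grid_point_in) simp
  have upd: "mixed_row i (Suc k) = ?M[k := ?b]"
  proof (rule nth_equalityI)
    fix j assume "j < length (mixed_row i (Suc k))"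
    then have j: "j \<le> N" by (simp add: length_mixed_row)
    have "j mod N = k \<longleftrightarrow> j = k" using j k by (cases "j < N") auto
    then show "mixed_row i (Suc k) ! j = ?M[k := ?b] ! j"
      using j k by (auto simp: nth_mixed_row length_mixed_row nth_list_update)
  qed (simp add: length_mixed_row)
  have Mk: "?M ! (k - 1) = label (Suc i) (k - 1)" "?M ! k = label i k"
    using k by (simp_all add: nth_mixed_row)
  have T1: "flag_tri G S (?M ! (k - 1)) (?M ! k) ?b"
    unfolding Mk using k i
    by (intro H_flag_tri[OF _ _ _ s grid_point_in[of k]] label_at_corner) auto
  have "?M ! Suc k \<in> support (H (?s, real (Suc k) / N))"
  proof (cases "Suc k < N")
    case True
    then have "?M ! Suc k = label i (Suc k)" by (simp add: nth_mixed_row)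
    moreover have "label i (Suc k) \<in> support (H (?s, real (Suc k) / N))"
      using i True by (intro label_at_corner) auto
    ultimately show ?thesis by simp
  next
    case False
    then have "Suc k = N" using k by simp
    moreover have "label (Suc i) 0 \<in> support (H (?s, real 0 / N))"
      using i N_ge2 by (intro label_at_corner) auto
    ultimately show ?thesis using k support_H_closed[OF s] by (simp add: nth_mixed_row)
  qed
  then have T2: "flag_tri G S (?M ! k) ?b (?M ! Suc k)"
    unfolding Mk using k i
    by (intro H_flag_tri[OF _ _ _ s grid_point_in[of "Suc k"]] label_at_corner) auto
  have "flag_equiv G S ?M (?M[k := ?b])"
    by (rule flag_equiv_replace) (use k T1 T2 in \<open>simp_all add: length_mixed_row\<close>)
  then show ?thesis using upd by simp
qed

lemma mixed_row_1_equiv: "Suc i < N \<Longrightarrow> flag_equiv G S (mixed_row i 1) (row (Suc i))"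
proof -
  assume i: "Suc i < N"
  have "flag_equiv G S (mixed_row i 1) (mixed_row i (Suc d))" if "Suc d \<le> N" for d
    using that
  proof (induction d)
    case (Suc d)
    have "flag_equiv G S (mixed_row i 1) (mixed_row i (Suc d))" using Suc by simp
    moreover have "flag_equiv G S (mixed_row i (Suc d)) (mixed_row i (Suc (Suc d)))"
      using Suc.prems by (intro mixed_row_step[OF i]) simp_all
    ultimately show ?case by (rule flag_equiv_trans)
  qed simp
  from this[of "N - 1"] show ?thesis using N_ge2 mixed_row_N by simp
qed

text \<open>Passing from row i + 1 to row i changes only the base vertex of the loop.\<close>

lemma row_null_step:
  assumes i: "Suc i < N" and null: "flag_equiv G S (row (Suc i)) [hd (row (Suc i))]"
  shows "flag_equiv G S (row i) [hd (row i)]"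
proof -
  let ?a = "label i 0" and ?b = "label (Suc i) 0" and ?mid = "map (label i) [1..<N]"
    and ?s = "real (Suc i) / N"
  have s: "?s \<in> {0..1}" using i by (intro grid_point_in) simp
  have N1: "1 \<le> N" using N_ge2 by simp
  have mid_eq: "map (\<lambda>j. label (if j mod N < k then Suc i else i) (j mod N)) [1..<N] = ?mid"
    if "k \<le> 1" for k
    by (rule map_cong[OF refl]) (use that in simp)
  have M1: "mixed_row i 1 = [?b] @ ?mid @ [?b]"
    unfolding mixed_row_def map_upt_Suc_split[OF N1] using mid_eq[of 1] N1 by simp
  have R: "row i = [?a] @ ?mid @ [?a]"
    unfolding row_def map_upt_Suc_split[OF N1] using mid_eq[of 0] N1 by simp
  have "flag_equiv G S (mixed_row i 1) [?b]"
    using flag_equiv_trans[OF mixed_row_1_equiv[OF i] null] by (simp add: hd_row)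
  then have nullb: "flag_equiv G S ([?b] @ ?mid @ [?b]) [?b]" using M1 by simp
  have mid: "?mid \<noteq> []" "hd ?mid = label i 1" "last ?mid = label i (N - 1)"
    using N_ge2 by (simp_all add: hd_map last_map)
  have "label i (N - 1) \<in> support (H (?s, 0))"
    using label_at_corner[of i "N - 1" "Suc i" N] i N_ge2 support_H_closed[OF s] by simp
  moreover have "?b \<in> support (H (?s, 0))" "?a \<in> support (H (?s, 0))"
    using label_at_corner[of "Suc i" 0 "Suc i" 0] label_at_corner[of i 0 "Suc i" 0] i N_ge2 by simp_all
  ultimately have T1: "flag_tri G S (last ?mid) ?b ?a"
    unfolding mid(3) by (rule H_flag_tri[OF _ _ _ s]) simp
  have T2: "flag_tri G S ?b ?a (hd ?mid)"
    unfolding mid(2) using i N_ge2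
    by (intro H_flag_tri[OF _ _ _ s grid_point_in[of 1]] label_at_corner) auto
  show ?thesis using null_loop_shift_base[OF nullb mid(1) T1 T2] R by (simp add: hd_row)
qed

lemma all_rows_null:
  assumes "flag_equiv G S (row (N - 1)) [hd (row (N - 1))]" "i < N"
  shows "flag_equiv G S (row i) [hd (row i)]"
  using assms(2)
proof (induction "N - 1 - i" arbitrary: i)
  case 0
  then have "i = N - 1" by simp
  then show ?case using assms(1) by simp
next
  case (Suc d)
  then have i: "Suc i < N" by simp
  then have "flag_equiv G S (row (Suc i)) [hd (row (Suc i))]" using Suc.hyps(1)[of "Suc i"] Suc.hyps(2) by simp
  then show ?case by (rule row_null_step[OF i])
qed

lemma top_row:
  assumes "\<And>t. t \<in> {0..1} \<Longrightarrow> H (1, t) = vertex_pt c"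
  shows "row (N - 1) = replicate (Suc N) c"
proof (rule nth_equalityI)
  fix j assume "j < length (row (N - 1))"
  then have j: "j \<le> N" by (simp add: length_row)
  have "label (N - 1) (j mod N) \<in> support (H (real N / N, real (j mod N) / N))"
    using N_ge2 by (intro label_at_corner) auto
  then have "label (N - 1) (j mod N) = c"
    using assms[OF grid_point_in[of "j mod N"]] N_ge2 by simp
  moreover have "row (N - 1) ! j = label (N - 1) (j mod N)"
    unfolding row_def by (rule nth_map_upt_Suc[OF j])
  ultimately show "row (N - 1) ! j = replicate (Suc N) c ! j"
    using j by (simp del: replicate_Suc)
qed (simp add: length_row)

lemma bottom_labels_subdivide:
  assumes lV: "length V = Suc m" and N: "N = m * K"
    and H0: "\<And>t. t \<in> {0..1} \<Longrightarrow> H (0, t) = edge_path V t"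
  shows "subdivides K (map (label 0) [0..<N]) V"
  unfolding subdivides_def
proof (intro conjI allI impI)
  have V: "V \<noteq> []" using lV by auto
  have m: "0 < m" and K: "0 < K" using N N_ge2 by (auto intro: gr0I)
  have edge_point: "H (0, real j / N) = edge_path V (real j / N)" if "j \<le> N" for j
    using H0 grid_point_in[OF that] by simp
  show "length (map (label 0) [0..<N]) = (length V - 1) * K" using lV N by simp
  fix j assume "j < length (map (label 0) [0..<N])"
  then have j: "j < m * K" using N by simp
  let ?k = "j div K" and ?t = "real j / N"
  have k: "?k < m" using j K by (simp add: div_less_iff_less_mult)
  have "real (?k * K) \<le> real j" "real j \<le> real (Suc ?k * K)"
    using div_times_less_eq_dividend[of j K] mod_less_divisor[OF K, of j]
    by (simp_all only: of_nat_le_iff) (metis add.commute div_mult_mod_eq less_imp_le mult_Suc add_le_mono1)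
  then have "real ?k \<le> ?t * real (length V - 1)" "?t * real (length V - 1) \<le> real ?k + 1"
    using K m lV by (simp_all add: N field_simps)
  then obtain s where "edge_path V ?t = edge_pt (V ! ?k) (V ! Suc ?k) s"
    using edge_path_on_edge[of ?k V ?t] k lV by auto
  moreover have "label 0 j \<in> support (H (real 0 / N, ?t))"
    using j m K by (intro label_at_corner) (auto simp: N)
  ultimately have "label 0 j \<in> {V ! ?k, V ! Suc ?k}"
    using edge_point[of j] support_edge_pt j by (fastforce simp: N)
  then show "map (label 0) [0..<N] ! j = V ! (j div K) \<or> map (label 0) [0..<N] ! j = V ! Suc (j div K)"
    using j by (simp add: N)
next
  have V: "V \<noteq> []" using lV by auto
  have K: "0 < K" using N N_ge2 by (auto intro: gr0I)
  fix k assume "k < length V - 1"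
  then have k: "k < m" using lV by simp
  have kK: "k * K < N" using k K by (simp add: N)
  have "label 0 (k * K) \<in> support (H (real 0 / N, real (k * K) / N))"
    using kK by (intro label_at_corner) auto
  moreover have "edge_path V (real (k * K) / N) = vertex_pt (V ! k)"
    by (rule edge_path_at_vertex) (use V k lV K in \<open>simp_all add: N\<close>)
  ultimately show "map (label 0) [0..<N] ! (k * K) = V ! k"
    using H0 grid_point_in[of "k * K"] kK by simp
qed

lemma bottom_row:
  assumes ch: "edge_chain G S V" and closed: "last V = hd V"
    and lV: "length V = Suc m" and N: "N = m * K"
    and H0: "\<And>t. t \<in> {0..1} \<Longrightarrow> H (0, t) = edge_path V t"
  shows "hd (row 0) = hd V" "flag_equiv G S (row 0) V"
proof -
  have V: "V \<noteq> []" using lV by auto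
  have K: "0 < K" using N N_ge2 by (auto intro: gr0I)
  have "label 0 0 \<in> support (H (real 0 / N, real 0 / N))"
    using N_ge2 by (intro label_at_corner) auto
  moreover have "H (0, 0) = vertex_pt (hd V)"
    using H0[of 0] edge_path_start[OF V, of 0] by simp
  ultimately have l00: "label 0 0 = hd V" by simp
  then show "hd (row 0) = hd V" by (simp add: hd_row)
  have "map (\<lambda>j. label 0 (j mod N)) [0..<N] = map (label 0) [0..<N]" by (intro map_cong) auto
  then have "row 0 = map (label 0) [0..<N] @ [last V]" using l00 closed by (simp add: row_def)
  then show "flag_equiv G S (row 0) V"
    using flag_equiv_subdivision[OF ch bottom_labels_subdivide[OF lV N H0] K] by simp
qed

end

lemma dist_Pair_le: "dist (a, b) (c, d) \<le> dist a c + dist b d"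
  using sqrt_sum_squares_le_sum_abs[of "dist a c" "dist b d"] by (simp add: dist_Pair_Pair)

lemma grid_labelling_Lebesgue:
  assumes H_in: "\<And>x. x \<in> {0..1} \<times> {0..1} \<Longrightarrow> H x \<in> flag_realization G S"
    and H_closed: "\<And>s. s \<in> {0..1} \<Longrightarrow> H (s, 1) = H (s, 0)"
    and w: "\<And>x y. x \<in> {0..1} \<times> {0..1} \<Longrightarrow> y \<in> {0..1} \<times> {0..1} \<Longrightarrow> dist y x < e
      \<Longrightarrow> w x \<in> support (H y)"
    and N: "2 \<le> N" "2 / real N < e"
  shows "grid_labelling G S H N (\<lambda>i j. w (real i / N, real j / N))"
proof
  fix i j and s t :: real
  assume ij: "i < N" "j < N" and st: "s \<in> {0..1}" "t \<in> {0..1}"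
    and cell: "real i \<le> s * N" "s * N \<le> real i + 1" "real j \<le> t * N" "t * N \<le> real j + 1"
  have Np: "0 < real N" using N by simp
  have "dist (s, t) (real i / N, real j / N) \<le> dist s (real i / N) + dist t (real j / N)"
    by (rule dist_Pair_le)
  also have "\<dots> \<le> 1 / N + 1 / N"
    using dist_grid_point[OF Np, of s i] dist_grid_point[OF Np, of t j] cell by simp
  also have "\<dots> < e" using N by simp
  finally show "w (real i / N, real j / N) \<in> support (H (s, t))"
    using w st ij Np by (simp add: divide_le_eq_1)
qed (use assms in auto)

lemma fine_multiple:
  assumes "0 < (e::real)" "0 < m"
  obtains K where "0 < K" "2 \<le> m * K" "2 / real (m * K) < e"
proof -
  obtain K0 :: nat where K0: "0 < K0" "inverse (real K0) < e / 2"
    using ex_inverse_of_nat_less[of "e / 2"] assms(1) by auto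
  then have K: "2 / real (Suc K0) < e" using assms(1) by (simp add: field_simps)
  have "1 * 2 \<le> m * Suc K0" using assms(2) K0(1) by (intro mult_le_mono) simp_all
  moreover have "Suc K0 \<le> m * Suc K0" using mult_le_mono1[of 1 m "Suc K0"] assms(2) by simp
  then have "2 / real (m * Suc K0) \<le> 2 / real (Suc K0)"
    by (intro divide_left_mono) (simp_all only: of_nat_le_iff of_nat_0_less_iff zero_less_mult_iff, auto)
  ultimately show ?thesis using that[of "Suc K0"] K by simp
qed

lemma contractible_edge_loop_null:
  assumes ch: "edge_chain G S V" and closed: "last V = hd V" and lV: "2 \<le> length V"
    and hl: "homotopic_loops (flag_realization G S) (edge_path V) (\<lambda>t. vertex_pt (hd V))"
  shows "flag_equiv G S V [hd V]"
proof -
  let ?sq = "{0..1::real} \<times> {0..1::real}"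
  obtain H where H: "continuous_on ?sq H" "H \<in> ?sq \<rightarrow> flag_realization G S"
    "\<forall>t\<in>{0..1}. H (0, t) = edge_path V t" "\<forall>t\<in>{0..1}. H (1, t) = vertex_pt (hd V)"
    "\<forall>s\<in>{0..1}. pathfinish (H \<circ> Pair s) = pathstart (H \<circ> Pair s)"
    using hl unfolding homotopic_loops by blast
  have H_in: "x \<in> ?sq \<Longrightarrow> H x \<in> flag_realization G S" for x using H(2) by blast
  have H_closed: "H (s, 1) = H (s, 0)" if "s \<in> {0..1}" for s :: real
    using H(5) that by (simp add: pathstart_def pathfinish_def)
  obtain e w where e: "0 < e"
    and w: "\<And>x y. x \<in> ?sq \<Longrightarrow> y \<in> ?sq \<Longrightarrow> dist y x < e \<Longrightarrow> w x \<in> support (H y)"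
    using realization_Lebesgue_number[OF compact_Times[OF compact_Icc compact_Icc] H(1) H_in] by blast
  define m where "m = length V - 1"
  have lVm: "length V = Suc m" using lV by (simp add: m_def)
  have "0 < m" using lV by (simp add: m_def)
  then obtain K where K: "0 < K" "2 \<le> m * K" "2 / real (m * K) < e"
    by (rule fine_multiple[OF e])
  define N where "N = m * K"
  interpret grid: grid_labelling G S H N "\<lambda>i j. w (real i / N, real j / N)"
    by (rule grid_labelling_Lebesgue[OF H_in H_closed w]) (use K in \<open>simp_all add: N_def\<close>)
  have top: "grid.row (N - 1) = replicate (Suc N) (hd V)"
    by (rule grid.top_row) (use H(4) in blast)
  have "hd V \<in> carrier G" using ch by (cases V) (auto simp: edge_chain_def)
  then have "flag_equiv G S (grid.row (N - 1)) [hd (grid.row (N - 1))]"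
    unfolding top using flag_equiv_replicate by (simp del: replicate_Suc)
  then have null: "flag_equiv G S (grid.row 0) [hd (grid.row 0)]"
    using grid.all_rows_null grid.N_ge2 by simp
  have H0: "H (0, t) = edge_path V t" if "t \<in> {0..1}" for t using H(3) that by blast
  have "hd (grid.row 0) = hd V" "flag_equiv G S (grid.row 0) V"
    by (rule grid.bottom_row[OF ch closed lVm N_def H0], assumption)+
  then show ?thesis using flag_equiv_trans[OF flag_equiv_sym[of _ _ "grid.row 0" V] null] by simp
qed

context cayley_setting
begin

text \<open>Since S generates G, an edge path joins any two vertices; sliding the constant loop along
  it is a homotopy of loops.\<close>

lemma homotopic_const_loops:
  assumes gen: "generate G S = carrier G" and v: "v \<in> carrier G" and u: "u \<in> carrier G"
  shows "homotopic_loops (flag_realization G S) (\<lambda>t. vertex_pt v) (\<lambda>t. vertex_pt u)"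
proof -
  obtain w where w: "word_over S w" "word_eval G w = inv v \<otimes> u"
    using generate_word[of "inv v \<otimes> u"] gen v u by auto
  let ?M = "trace G v w"
  have ch: "edge_chain G S ?M" by (rule edge_chain_trace[OF v w(1)])
  have lM: "last ?M = u" using trace_last[OF v w(1)] w(2) v u by (simp add: m_assoc[symmetric])
  define h where "h = (\<lambda>y::real \<times> real. edge_path ?M (fst y))"
  have c1: "continuous_on ({0..1} \<times> {0..1}) h" unfolding h_def
    by (rule continuous_on_compose2[OF continuous_on_edge_path continuous_on_fst[OF continuous_on_id]]) simp
  have c2: "h \<in> ({0..1} \<times> {0..1}) \<rightarrow> flag_realization G S"
  proof (rule funcsetI)
    fix y :: "real \<times> real" assume "y \<in> {0..1} \<times> {0..1}"
    then show "h y \<in> flag_realization G S" unfolding h_def using edge_path_in_realization[OF ch, of "fst y"] by auto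
  qed
  have c3: "\<forall>x\<in>{0..1}. h (0, x) = vertex_pt v" unfolding h_def using edge_path_start[of ?M 0] by simp
  have c4: "\<forall>x\<in>{0..1}. h (1, x) = vertex_pt u" unfolding h_def using edge_path_end[of ?M 1] lM by simp
  have c5: "\<forall>t\<in>{0..1}. pathfinish (h \<circ> Pair t) = pathstart (h \<circ> Pair t)"
    unfolding h_def by (simp add: pathstart_def pathfinish_def)
  show ?thesis unfolding homotopic_loops using c1 c2 c3 c4 c5 by blast
qed

lemma presentation_loop_null:
  assumes gen: "generate G S = carrier G" and pres: "is_presentation G S (triangle_relators G S)"
    and p: "path p" "path_image p \<subseteq> flag_realization G S" "pathfinish p = pathstart p"
  shows "homotopic_loops (flag_realization G S) p (\<lambda>t. vertex_pt \<one>)"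
proof -
  let ?X = "flag_realization G S"
  obtain L where L: "edge_chain G S L" "last L = hd L" "homotopic_loops ?X p (edge_path L)"
    by (rule loop_homotopic_edge_loop[OF p])
  have v: "hd L \<in> carrier G" using L(1) by (cases L) (auto simp: edge_chain_def)
  have "flag_equiv G S L [hd L]" by (rule presentation_edge_loop_null[OF pres L(1,2)])
  then have "homotopic_paths ?X (edge_path L) (edge_path [hd L])" using flag_equiv_homotopic L(1) by blast
  moreover have "edge_path [hd L] = (\<lambda>t. vertex_pt (hd L))" by (rule ext) simp
  ultimately have hp: "homotopic_paths ?X (edge_path L) (\<lambda>t. vertex_pt (hd L))" by simp
  have ne: "L \<noteq> []" using L(1) by (simp add: edge_chain_def)
  have "homotopic_loops ?X (edge_path L) (\<lambda>t. vertex_pt (hd L))"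
    by (rule homotopic_paths_imp_homotopic_loops[OF hp])
       (use L(2) ne edge_path_start[of L 0] edge_path_end[of L 1] in \<open>simp_all add: pathstart_def pathfinish_def\<close>)
  then have "homotopic_loops ?X p (\<lambda>t. vertex_pt (hd L))" by (rule homotopic_loops_trans[OF L(3)])
  then show ?thesis by (rule homotopic_loops_trans[OF _ homotopic_const_loops[OF gen v one_closed]])
qed

lemma presentation_imp_simply_connected:
  assumes gen: "generate G S = carrier G" and pres: "is_presentation G S (triangle_relators G S)"
  shows "simply_connected (flag_realization G S)"
  unfolding simply_connected_def
proof (intro allI impI, elim conjE)
  fix p q
  assume "path p" "pathfinish p = pathstart p" "path_image p \<subseteq> flag_realization G S"
    and "path q" "pathfinish q = pathstart q" "path_image q \<subseteq> flag_realization G S"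
  then have "homotopic_loops (flag_realization G S) p (\<lambda>t. vertex_pt \<one>)"
    "homotopic_loops (flag_realization G S) q (\<lambda>t. vertex_pt \<one>)"
    using presentation_loop_null[OF gen pres] by auto
  then show "homotopic_loops (flag_realization G S) p q"
    by (meson homotopic_loops_sym homotopic_loops_trans)
qed

lemma simply_connected_relator_in_normal_closure:
  assumes sc: "simply_connected (flag_realization G S)"
    and w: "word_over S w" and e: "word_eval G w = \<one>" and ne: "w \<noteq> []"
  shows "in_normal_closure S (triangle_relators G S) w"
proof -
  let ?X = "flag_realization G S" and ?V = "trace G \<one> w"
  have ch: "edge_chain G S ?V" by (rule edge_chain_trace[OF one_closed w])
  have closed: "last ?V = hd ?V" using trace_last[OF one_closed w] e by simp
  have "2 \<le> length ?V" using ne by (cases w) (simp_all add: length_trace)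
  moreover have "homotopic_loops ?X (edge_path ?V) (\<lambda>t. vertex_pt (hd ?V))"
  proof -
    have "path (edge_path ?V)" "pathfinish (edge_path ?V) = pathstart (edge_path ?V)"
      "path_image (edge_path ?V) \<subseteq> ?X"
      using path_edge_path path_image_edge_path[OF ch] closed
      by (simp_all add: pathstart_edge_path pathfinish_edge_path)
    moreover have "path (\<lambda>t::real. vertex_pt (hd ?V))" "path_image (\<lambda>t::real. vertex_pt (hd ?V)) \<subseteq> ?X"
      using vertex_pt_in_realization[OF one_closed] by (auto simp: path_def path_image_def)
    ultimately show ?thesis
      using sc unfolding simply_connected_def by (simp add: pathstart_def pathfinish_def)
  qed
  ultimately have "flag_equiv G S ?V [hd ?V]"
    by (rule contractible_edge_loop_null[OF ch closed])
  then show ?thesis by (intro null_trace_in_normal_closure[OF w]) simp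
qed

lemma simply_connected_imp_presentation:
  assumes gen: "generate G S = carrier G" and sc: "simply_connected (flag_realization G S)"
  shows "is_presentation G S (triangle_relators G S)"
  unfolding is_presentation_def
proof (intro conjI ballI allI impI iffI)
  fix g assume "g \<in> carrier G"
  then show "\<exists>w. word_over S w \<and> word_eval G w = g" using generate_word gen by simp
next
  fix w assume "word_over S w" "word_eval G w = \<one>"
  then show "in_normal_closure S (triangle_relators G S) w"
    using simply_connected_relator_in_normal_closure[OF sc] in_normal_closure_Nil by blast
next
  fix w assume "word_over S w" "in_normal_closure S (triangle_relators G S) w"
  then show "word_eval G w = \<one>" by (rule normal_closure_word_eval)
qed

end

theorem mainTheorem1:
  fixes G :: "('a, 'b) monoid_scheme" and S :: "'a set"
  assumes "group G"
    and "finite S"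
    and "S \<subseteq> carrier G"
    and "generate G S = carrier G"
    and "\<forall>s\<in>S. inv\<^bsub>G\<^esub> s \<notin> S"
  shows "simply_connected (flag_realization G S) \<longleftrightarrow>
         is_presentation G S (triangle_relators G S)"
proof -
  interpret cayley_setting G S
    using assms(1,3,5) by (simp add: cayley_setting_def cayley_setting_axioms_def)
  show ?thesis
    using presentation_imp_simply_connected simply_connected_imp_presentation assms(4) by blast
qed

end
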